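(* Let $\mathcal{H}$ be a real Hilbert space, let $A\colon \mathcal{H}\rightrightarrows\mathcal{H}$ be maximally monotone and let $B\colon \mathcal{H}\to\mathcal{H}$ be monotone with $(A+B)^{-1}(0)\neq\varnothing$. Suppose $\alpha\in[0,1)$, $\beta\in(0,1]$, $\lambda>0$ and either (a) $B$ is $L$-Lipschitz and $\lambda < \min\left\{\frac{2-\beta -\alpha \beta -2\alpha}{2L}, \frac{1-\alpha-\alpha\beta}{\beta L}\right\}$, or (b) $B$ is $(1/L)$-cocoercive, $\alpha<\frac{2-\beta}{2+\beta}$ and $\lambda < \min\left\{ \frac{2-\beta -\alpha \beta + 2\alpha}{2L},\frac{1-\alpha+\alpha\beta}{\beta L}\right\}$. Given $x_0,x_{-1}\in\mathcal{H}$, define sequences $(x_k)$, $(z_k)$ by $$z_{k+1} := J_{\lambda A}\Bigl( x_k - \lambda B(x_k) - \frac{\lambda}{\beta}(B(x_k)- B(x_{k-1})) + \frac{\alpha}{\beta}(x_k-x_{k-1}) \Bigr),\qquad x_{k+1} := (1-\beta) x_k + \beta z_{k+1}$$ for all $k\in\mathbb{N}$. Then $(x_k)$ converges weakly to a point in $(A+B)^{-1}(0)$.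
   Context: $J_{\lambda A}:=(I+\lambda A)^{-1}$ is the resolvent. $B$ is $\beta'$-cocoercive if $\langle x-y,B(x)-B(y)\rangle\geq\beta'\|B(x)-B(y)\|^2$ for all $x,y$; here $\beta'=1/L$. *)

theory Defs
  imports "HOL-Analysis.Analysis"
begin

definition monotone_op :: "('a::real_inner \<Rightarrow> 'a set) \<Rightarrow> bool" where
  "monotone_op A \<longleftrightarrow>
     (\<forall>x y u v. u \<in> A x \<longrightarrow> v \<in> A y \<longrightarrow> inner (x - y) (u - v) \<ge> 0)"

definition maximal_monotone :: "('a::real_inner \<Rightarrow> 'a set) \<Rightarrow> bool" where
  "maximal_monotone A \<longleftrightarrow> monotone_op A \<and>
     (\<forall>A'. monotone_op A' \<and> (\<forall>x. A x \<subseteq> A' x) \<longrightarrow> A' = A)"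

definition cocoercive :: "real \<Rightarrow> ('a::real_inner \<Rightarrow> 'a) \<Rightarrow> bool" where
  "cocoercive b B \<longleftrightarrow>
     (\<forall>x y. inner (x - y) (B x - B y) \<ge> b * (norm (B x - B y))\<^sup>2)"

text \<open>For a maximally monotone A this is single-valued with full domain (Minty).\<close>
definition resolvent :: "real \<Rightarrow> ('a::real_inner \<Rightarrow> 'a set) \<Rightarrow> 'a \<Rightarrow> 'a" where
  "resolvent lam A w = (THE z. \<exists>u \<in> A z. w = z + lam *\<^sub>R u)"

definition zeros_sum :: "('a::real_inner \<Rightarrow> 'a set) \<Rightarrow> ('a \<Rightarrow> 'a) \<Rightarrow> 'a set" where
  "zeros_sum A B = {x. \<exists>u \<in> A x. u + B x = 0}"

definition weakly_converges :: "(nat \<Rightarrow> 'a::real_inner) \<Rightarrow> 'a \<Rightarrow> bool" where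
  "weakly_converges x p \<longleftrightarrow> (\<forall>y. (\<lambda>k. inner (x k) y) \<longlonglongrightarrow> inner p y)"

end

theory Submission
  imports Defs "HOL-Library.Diagonal_Subsequence"
begin

text \<open>Fix
  \<open>p \<in> (A + B)\<^sup>-\<^sup>1(0)\<close>. Monotonicity of \<open>A\<close> between \<open>z\<^sub>k\<^sub>+\<^sub>1\<close> and \<open>p\<close>, together with the Lipschitz or
  cocoercivity estimate for \<open>B\<close>, makes the energy
  \<open>\<Phi>\<^sub>k = \<beta> (\<parallel>x\<^sub>k - p\<parallel>\<^sup>2 - \<alpha> \<parallel>x\<^sub>k\<^sub>-\<^sub>1 - p\<parallel>\<^sup>2) + 2 \<lambda> \<beta> \<langle>x\<^sub>k - p, B x\<^sub>k\<^sub>-\<^sub>1 - B p\<rangle> + \<kappa> \<parallel>x\<^sub>k - x\<^sub>k\<^sub>-\<^sub>1\<parallel>\<^sup>2\<close>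
  decrease by positive multiples of \<open>\<parallel>x\<^sub>k\<^sub>+\<^sub>1 - x\<^sub>k\<parallel>\<^sup>2\<close> and of \<open>\<langle>x\<^sub>k - p, B x\<^sub>k - B p\<rangle> \<ge> 0\<close>, while
  dominating \<open>\<beta> (\<parallel>x\<^sub>k - p\<parallel>\<^sup>2 - \<rho> \<parallel>x\<^sub>k\<^sub>-\<^sub>1 - p\<parallel>\<^sup>2)\<close> for some \<open>\<rho> < 1\<close>; the step-size conditions are
  what make such constants \<open>\<kappa>, \<rho>\<close> exist. Hence \<open>\<parallel>x\<^sub>k - p\<parallel>\<close> converges and \<open>x\<^sub>k\<^sub>+\<^sub>1 - x\<^sub>k \<rightarrow> 0\<close>, so
  the residuals of the resolvent steps vanish and, by maximal monotonicity, every weak cluster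
  point of \<open>(x\<^sub>k)\<close> is a zero of \<open>A + B\<close>. Opial's lemma concludes. The argument also needs weak
  sequential compactness of bounded sequences (through a Riesz representation on closed
  subspaces) and Minty's theorem, which makes the resolvent everywhere defined.\<close>

section \<open>Hilbert spaces and weak convergence\<close>

lemma linear_coeff_eq_0_if_quadratic_nonneg:
  fixes a c :: real
  assumes "0 \<le> a" and "\<And>t. 0 \<le> t * t * a - 2 * t * c"
  shows "c = 0"
proof -
  have "c * c \<le> 0"
  proof (cases "a = 0")
    case True
    with assms(2)[of c] show ?thesis by simp
  next
    case False
    with assms(1) have a: "a > 0" by simp
    have "0 \<le> (c/a) * (c/a) * a - 2 * (c/a) * c" using assms(2) .
    also have "\<dots> = - (c * c) / a" using a by (simp add: field_simps)
    finally show ?thesis using a by (simp add: divide_nonneg_pos field_simps)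
  qed
  then show ?thesis by (metis antisym zero_le_square mult_eq_0_iff)
qed

lemma norm_convex_comb_power2:
  fixes a b :: "'a::real_inner"
  shows "(norm (t *\<^sub>R a + (1 - t) *\<^sub>R b))\<^sup>2 =
     t * (norm a)\<^sup>2 + (1 - t) * (norm b)\<^sup>2 - t * (1 - t) * (norm (a - b))\<^sup>2"
  by (simp add: power2_norm_eq_inner inner_add_left inner_add_right inner_diff_left
      inner_diff_right inner_commute algebra_simps)

lemma norm_midpoint_diff_power2:
  fixes y d z :: "'a::real_inner"
  shows "(norm ((1/2) *\<^sub>R (y + d) - z))\<^sup>2 = (norm ((1/2) *\<^sub>R (y - d)))\<^sup>2 + inner (z - y) (z - d)"
  by (simp add: power2_norm_eq_inner inner_add_left inner_add_right inner_diff_left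
      inner_diff_right inner_commute algebra_simps)

lemma two_inner_le_weighted:
  fixes a b :: "'a::real_inner"
  assumes "0 < c"
  shows "2 * inner a b \<le> c * (norm a)\<^sup>2 + (norm b)\<^sup>2 / c"
proof -
  have "(norm (c *\<^sub>R a - b))\<^sup>2 = c * (c * (norm a)\<^sup>2 - 2 * inner a b + (norm b)\<^sup>2 / c)"
    using assms unfolding power2_norm_eq_inner
    by (simp add: inner_diff_left inner_diff_right inner_commute field_simps)
  then have "0 \<le> c * (c * (norm a)\<^sup>2 - 2 * inner a b + (norm b)\<^sup>2 / c)" by (metis zero_le_power2)
  then show ?thesis using assms by (simp add: zero_le_mult_iff)
qed

lemma inner_tendsto_zero_if_bounded:
  fixes f g :: "nat \<Rightarrow> 'a::real_inner"
  assumes "f \<longlonglongrightarrow> 0" and "\<And>n. norm (g n) \<le> K"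
  shows "(\<lambda>n. inner (f n) (g n)) \<longlonglongrightarrow> 0"
proof (rule tendsto_0_le[OF assms(1), of _ K], intro always_eventually allI)
  fix n
  have "norm (inner (f n) (g n)) \<le> norm (f n) * norm (g n)" by (simp add: Cauchy_Schwarz_ineq2)
  also have "\<dots> \<le> norm (f n) * K" using assms(2) by (simp add: mult_left_mono)
  finally show "norm (inner (f n) (g n)) \<le> norm (f n) * K" .
qed

lemma Cauchy_if_norm_diff_power2_le:
  fixes u :: "nat \<Rightarrow> 'a::real_normed_vector"
  assumes close: "\<And>i j. (norm (u i - u j))\<^sup>2 \<le> 2 / Suc i + 2 / Suc j"
  shows "Cauchy u"
proof (rule metric_CauchyI)
  fix e :: real assume e: "e > 0"
  obtain N :: nat where N: "4 / e\<^sup>2 < N" using reals_Archimedean2 by blast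
  with e have "N > 0" by (metis of_nat_0_less_iff order.strict_trans zero_less_divide_iff
      zero_less_numeral zero_less_power)
  have "dist (u i) (u j) < e" if "N \<le> i" "N \<le> j" for i j
  proof -
    have "2 / Suc i \<le> 2 / N" "2 / Suc j \<le> 2 / N" using that \<open>N > 0\<close> by (simp_all add: frac_le)
    with close[of i j] have "(norm (u i - u j))\<^sup>2 \<le> 4 / N" by simp
    also have "4 / N < e\<^sup>2" using N e \<open>N > 0\<close> by (simp add: field_simps)
    finally show ?thesis using e by (simp add: dist_norm power_less_imp_less_base)
  qed
  then show "\<exists>M. \<forall>i\<ge>M. \<forall>j\<ge>M. dist (u i) (u j) < e" by blast
qed

lemma minimizing_sequence_convergent:
  fixes h :: "'b \<Rightarrow> real" and m :: "'b \<Rightarrow> 'a::{real_inner,complete_space}"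
  assumes "C \<noteq> {}" and bdd: "bdd_below (h ` C)"
    and mid: "\<And>a b. a \<in> C \<Longrightarrow> b \<in> C \<Longrightarrow>
      \<exists>c\<in>C. h c \<le> (h a + h b) / 2 - (norm (m a - m b))\<^sup>2 / 4"
  obtains f l where "\<And>n. f n \<in> C" "(\<lambda>n. h (f n)) \<longlonglongrightarrow> Inf (h ` C)" "(\<lambda>n. m (f n)) \<longlonglongrightarrow> l"
proof -
  define s where "s = Inf (h ` C)"
  have s_le: "s \<le> h c" if "c \<in> C" for c
    unfolding s_def using bdd that by (simp add: cInf_lower)
  have "\<exists>c\<in>C. h c < s + 1 / Suc n" for n
  proof -
    have "Inf (h ` C) < s + 1 / Suc n" unfolding s_def by simp
    then show ?thesis using \<open>C \<noteq> {}\<close> bdd by (subst (asm) cInf_less_iff) auto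
  qed
  then obtain f where f: "\<And>n. f n \<in> C" "\<And>n. h (f n) < s + 1 / Suc n" by metis
  have "(norm (m (f i) - m (f j)))\<^sup>2 \<le> 2 / Suc i + 2 / Suc j" for i j
  proof -
    obtain c where "c \<in> C" "h c \<le> (h (f i) + h (f j)) / 2 - (norm (m (f i) - m (f j)))\<^sup>2 / 4"
      using mid[OF f(1) f(1)] by blast
    moreover have "2 / real (Suc i) = 2 * (1 / Suc i)" "2 / real (Suc j) = 2 * (1 / Suc j)"
      by simp_all
    ultimately show ?thesis using s_le[of c] f(2)[of i] f(2)[of j] by argo
  qed
  then have "Cauchy (\<lambda>n. m (f n))" by (rule Cauchy_if_norm_diff_power2_le)
  then obtain l where l: "(\<lambda>n. m (f n)) \<longlonglongrightarrow> l" using Cauchy_convergent_iff convergent_def by blast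
  have "(\<lambda>n. h (f n)) \<longlonglongrightarrow> s"
  proof (rule tendsto_sandwich[of "\<lambda>n. s" _ _ "\<lambda>n. s + 1 / Suc n"])
    have "(\<lambda>n. s + 1 / real (Suc n)) \<longlonglongrightarrow> s + 0"
      by (intro tendsto_intros LIMSEQ_inverse_real_of_nat[unfolded inverse_eq_divide])
    then show "(\<lambda>n. s + 1 / real (Suc n)) \<longlonglongrightarrow> s" by simp
    show "\<forall>\<^sub>F n in sequentially. s \<le> h (f n)" using s_le f(1) by auto
    show "\<forall>\<^sub>F n in sequentially. h (f n) \<le> s + 1 / Suc n"
      using f(2) by (intro always_eventually allI less_imp_le)
  qed simp
  then show ?thesis unfolding s_def by (rule that[OF f(1) _ l])
qed

lemma strongly_convex_attains_min:
  fixes Q :: "'a::{real_inner,complete_space} \<Rightarrow> real"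
  assumes "C \<noteq> {}" "closed C" "convex C" "continuous_on C Q" "bdd_below (Q ` C)"
    and mid: "\<And>a b. a \<in> C \<Longrightarrow> b \<in> C \<Longrightarrow>
      Q ((1/2) *\<^sub>R a + (1/2) *\<^sub>R b) \<le> (Q a + Q b) / 2 - (norm (a - b))\<^sup>2 / 4"
  obtains l where "l \<in> C" "\<And>c. c \<in> C \<Longrightarrow> Q l \<le> Q c"
proof -
  have "\<exists>c\<in>C. Q c \<le> (Q a + Q b) / 2 - (norm (id a - id b))\<^sup>2 / 4" if "a \<in> C" "b \<in> C" for a b
  proof -
    have "(1/2) *\<^sub>R a + (1/2) *\<^sub>R b \<in> C" using \<open>convex C\<close> that by (intro convexD) auto
    with mid[OF that] show ?thesis by auto
  qed
  then obtain f l where f: "\<And>n. f n \<in> C" "(\<lambda>n. Q (f n)) \<longlonglongrightarrow> Inf (Q ` C)"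
    and "(\<lambda>n. id (f n)) \<longlonglongrightarrow> l"
    using minimizing_sequence_convergent[of C Q id] \<open>C \<noteq> {}\<close> \<open>bdd_below (Q ` C)\<close> by blast
  then have "f \<longlonglongrightarrow> l" by simp
  have "l \<in> C" using \<open>closed C\<close> f(1) \<open>f \<longlonglongrightarrow> l\<close> closed_sequentially by blast
  have "(\<lambda>n. Q (f n)) \<longlonglongrightarrow> Q l"
    using continuous_on_tendsto_compose[OF \<open>continuous_on C Q\<close> \<open>f \<longlonglongrightarrow> l\<close> \<open>l \<in> C\<close>] f(1) by auto
  with f(2) have "Q l = Inf (Q ` C)" using LIMSEQ_unique by blast
  then show ?thesis using \<open>bdd_below (Q ` C)\<close> by (intro that[OF \<open>l \<in> C\<close>]) (simp add: cInf_lower)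
qed

lemma riesz_representation_closed_subspace:
  fixes M :: "'a::{real_inner,complete_space} set" and f :: "'a \<Rightarrow> real"
  assumes M: "subspace M" "closed M"
    and add: "\<And>a b. a \<in> M \<Longrightarrow> b \<in> M \<Longrightarrow> f (a + b) = f a + f b"
    and scale: "\<And>a c. a \<in> M \<Longrightarrow> f (c *\<^sub>R a) = c * f a"
    and bounded: "\<And>a. a \<in> M \<Longrightarrow> \<bar>f a\<bar> \<le> K * norm a" and K: "0 \<le> K"
  shows "\<exists>p\<in>M. \<forall>v\<in>M. f v = inner p v"
proof -
  have "K-lipschitz_on M f"
  proof (rule lipschitz_onI[OF _ K])
    fix a b assume "a \<in> M" "b \<in> M"
    then have "f a = f (a - b) + f b" using add[of "a - b" b] M(1) by (simp add: subspace_diff)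
    then show "dist (f a) (f b) \<le> K * dist a b"
      using bounded[of "a - b"] M(1) \<open>a \<in> M\<close> \<open>b \<in> M\<close> by (simp add: dist_real_def dist_norm subspace_diff)
  qed
  then have cont: "continuous_on M (\<lambda>v. (norm v)\<^sup>2 - 2 * f v)"
    by (intro continuous_intros lipschitz_on_continuous_on)
  have "- K\<^sup>2 \<le> (norm c)\<^sup>2 - 2 * f c" if "c \<in> M" for c
  proof -
    have "f c \<le> K * norm c" using bounded[OF that] by simp
    moreover have "0 \<le> (norm c - K)\<^sup>2" by simp
    ultimately show ?thesis by (simp add: power2_eq_square algebra_simps)
  qed
  then have bdd: "bdd_below ((\<lambda>v. (norm v)\<^sup>2 - 2 * f v) ` M)" by (intro bdd_belowI2)
  have mid: "(norm ((1/2) *\<^sub>R a + (1/2) *\<^sub>R b))\<^sup>2 - 2 * f ((1/2) *\<^sub>R a + (1/2) *\<^sub>R b)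
      \<le> ((norm a)\<^sup>2 - 2 * f a + ((norm b)\<^sup>2 - 2 * f b)) / 2 - (norm (a - b))\<^sup>2 / 4"
    if "a \<in> M" "b \<in> M" for a b
  proof -
    have "f ((1/2) *\<^sub>R a + (1/2) *\<^sub>R b) = (1/2) * f a + (1/2) * f b"
      using that M(1) by (simp add: add scale subspace_scale)
    then show ?thesis using norm_convex_comb_power2[of "1/2" a b] by simp
  qed
  obtain l where l: "l \<in> M" "\<And>c. c \<in> M \<Longrightarrow> (norm l)\<^sup>2 - 2 * f l \<le> (norm c)\<^sup>2 - 2 * f c"
    using strongly_convex_attains_min[OF _ M(2) subspace_imp_convex[OF M(1)] cont bdd mid]
      subspace_0[OF M(1)] by blast
  have "f v = inner l v" if "v \<in> M" for v
  proof -
    have "f v - inner l v = 0"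
    proof (rule linear_coeff_eq_0_if_quadratic_nonneg[of "(norm v)\<^sup>2"])
      fix t
      have "l + t *\<^sub>R v \<in> M" using M(1) l(1) that by (simp add: subspace_add subspace_scale)
      from l(2)[OF this] have "(norm l)\<^sup>2 - 2 * f l \<le> (norm (l + t *\<^sub>R v))\<^sup>2 - 2 * f (l + t *\<^sub>R v)" .
      also have "f (l + t *\<^sub>R v) = f l + t * f v"
        using add[OF l(1)] scale[OF that] M(1) that by (simp add: subspace_scale)
      also have "(norm (l + t *\<^sub>R v))\<^sup>2 = (norm l)\<^sup>2 + 2 * t * inner l v + t * t * (norm v)\<^sup>2"
        by (simp add: power2_norm_eq_inner inner_add_left inner_add_right inner_commute algebra_simps)
      finally show "0 \<le> t * t * (norm v)\<^sup>2 - 2 * t * (f v - inner l v)" by (simp add: algebra_simps)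
    qed simp
    then show ?thesis by simp
  qed
  then show ?thesis using l(1) by blast
qed

corollary orthogonal_projection_closed_subspace:
  fixes M :: "'a::{real_inner,complete_space} set"
  assumes "subspace M" "closed M"
  obtains P where "P \<in> M" "\<And>v. v \<in> M \<Longrightarrow> inner (d - P) v = 0"
proof -
  have "\<exists>P\<in>M. \<forall>v\<in>M. inner d v = inner P v"
    using assms by (rule riesz_representation_closed_subspace[where K = "norm d"])
      (simp_all add: inner_add_right Cauchy_Schwarz_ineq2)
  then show ?thesis using that by (auto simp: inner_diff_left)
qed

lemma bounded_seq_diagonal_inner_convergent:
  fixes x :: "nat \<Rightarrow> 'a::real_inner"
  assumes bound: "\<And>k. norm (x k) \<le> R"
  obtains r where "strict_mono r" "\<And>n. convergent (\<lambda>j. inner (x (r j)) (x n))"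
proof -
  interpret subseqs "\<lambda>n s. convergent (\<lambda>j. inner (x (s j)) (x n))"
  proof
    fix n and s :: "nat \<Rightarrow> nat"
    have "bounded (range (\<lambda>j. inner (x (s j)) (x n)))"
    proof (rule boundedI)
      fix y assume "y \<in> range (\<lambda>j. inner (x (s j)) (x n))"
      then obtain j where y: "y = inner (x (s j)) (x n)" by auto
      have "norm y \<le> norm (x (s j)) * norm (x n)"
        unfolding y real_norm_def by (rule Cauchy_Schwarz_ineq2)
      also have "\<dots> \<le> R * R" using bound by (intro mult_mono) (auto intro: order_trans[OF norm_ge_zero])
      finally show "norm y \<le> R * R" .
    qed
    from bounded_imp_convergent_subsequence[OF this] obtain l r where
      "strict_mono r" "((\<lambda>j. inner (x (s j)) (x n)) \<circ> r) \<longlonglongrightarrow> l" by blast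
    then show "\<exists>r'. strict_mono r' \<and> convergent (\<lambda>j. inner (x ((s \<circ> r') j)) (x n))"
      by (auto simp: convergent_def o_def)
  qed
  have "convergent (\<lambda>j. inner (x (diagseq j)) (x n))" for n
  proof -
    have "convergent (\<lambda>j. inner (x ((diagseq \<circ> (+) (Suc n)) j)) (x n))"
    proof (rule diagseq_holds)
      fix r s n assume "strict_mono (r :: nat \<Rightarrow> nat)" "convergent (\<lambda>j. inner (x (s j)) (x n))"
      then show "convergent (\<lambda>j. inner (x ((s \<circ> r) j)) (x n))"
        using LIMSEQ_subseq_LIMSEQ by (fastforce simp: convergent_def o_def)
    qed
    then obtain l where "(\<lambda>j. inner (x (diagseq (j + Suc n))) (x n)) \<longlonglongrightarrow> l"
      by (auto simp: convergent_def o_def add.commute)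
    then have "(\<lambda>j. inner (x (diagseq j)) (x n)) \<longlonglongrightarrow> l" by (rule LIMSEQ_offset)
    then show ?thesis by (auto simp: convergent_def)
  qed
  with subseq_diagseq show ?thesis by (rule that)
qed

lemma subspace_inner_convergent: "subspace {d. convergent (\<lambda>j. inner (y j) d)}"
  unfolding subspace_def
  by (auto simp: convergent_def inner_add_right intro: tendsto_add tendsto_mult_left)

lemma closed_inner_convergent:
  fixes y :: "nat \<Rightarrow> 'a::{real_inner,complete_space}"
  assumes bound: "\<And>j. norm (y j) \<le> R"
  shows "closed {d. convergent (\<lambda>j. inner (y j) d)}"
  unfolding closed_sequential_limits
proof (intro allI impI, elim conjE)
  fix ds d assume ds: "\<forall>n. ds n \<in> {d. convergent (\<lambda>j. inner (y j) d)}" and "ds \<longlonglongrightarrow> d"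
  have "0 \<le> R" using bound[of 0] norm_ge_zero order_trans by blast
  have "Cauchy (\<lambda>j. inner (y j) d)"
  proof (rule metric_CauchyI)
    fix e :: real assume "e > 0"
    define \<delta> where "\<delta> = e / (3 * (R + 1))"
    have "R * \<delta> < e / 3" unfolding \<delta>_def using \<open>0 \<le> R\<close> \<open>e > 0\<close> by (simp add: field_simps)
    have "0 < \<delta>" unfolding \<delta>_def using \<open>0 \<le> R\<close> \<open>e > 0\<close> by simp
    then obtain n where n: "dist (ds n) d < \<delta>"
      using \<open>ds \<longlonglongrightarrow> d\<close> by (auto simp: tendsto_iff eventually_sequentially)
    have near: "\<bar>inner (y i) (ds n) - inner (y i) d\<bar> \<le> R * \<delta>" for i
    proof -
      have "\<bar>inner (y i) (ds n) - inner (y i) d\<bar> \<le> norm (y i) * norm (ds n - d)"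
        by (metis Cauchy_Schwarz_ineq2 inner_diff_right)
      also have "\<dots> \<le> R * \<delta>"
        using n bound[of i] \<open>0 \<le> R\<close> by (intro mult_mono) (auto simp: dist_norm)
      finally show ?thesis .
    qed
    have "Cauchy (\<lambda>j. inner (y j) (ds n))" using ds by (simp add: Cauchy_convergent_iff)
    then obtain M where M: "\<And>i j. M \<le> i \<Longrightarrow> M \<le> j \<Longrightarrow>
        dist (inner (y i) (ds n)) (inner (y j) (ds n)) < e / 3"
      using \<open>e > 0\<close> metric_CauchyD[of _ "e/3"] by (meson divide_pos_pos zero_less_numeral)
    have "dist (inner (y i) d) (inner (y j) d) < e" if "M \<le> i" "M \<le> j" for i j
      using M[OF that] near[of i] near[of j] \<open>R * \<delta> < e / 3\<close> unfolding dist_real_def by arith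
    then show "\<exists>M. \<forall>i\<ge>M. \<forall>j\<ge>M. dist (inner (y i) d) (inner (y j) d) < e" by blast
  qed
  then show "d \<in> {d. convergent (\<lambda>j. inner (y j) d)}" by (simp add: Cauchy_convergent_iff)
qed

text \<open>The limit functional on \<open>M\<close> is represented by some \<open>p \<in> M\<close> (Riesz); against the
  orthogonal complement of \<open>M\<close> both \<open>y j\<close> and \<open>p\<close> vanish.\<close>
lemma weakly_convergent_if_convergent_on_closed_subspace:
  fixes y :: "nat \<Rightarrow> 'a::{real_inner,complete_space}"
  assumes M: "subspace M" "closed M" and y_M: "\<And>j. y j \<in> M" and bound: "\<And>j. norm (y j) \<le> R"
    and conv: "\<And>v. v \<in> M \<Longrightarrow> convergent (\<lambda>j. inner (y j) v)"
  shows "\<exists>p. weakly_converges y p"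
proof -
  define f where "f v = lim (\<lambda>j. inner (y j) v)" for v
  have f: "(\<lambda>j. inner (y j) v) \<longlonglongrightarrow> f v" if "v \<in> M" for v
    using conv[OF that] unfolding f_def by (simp add: convergent_LIMSEQ_iff)
  have "\<exists>p\<in>M. \<forall>v\<in>M. f v = inner p v"
  proof (rule riesz_representation_closed_subspace[OF M])
    fix a b assume "a \<in> M" "b \<in> M"
    then have "(\<lambda>j. inner (y j) (a + b)) \<longlonglongrightarrow> f a + f b"
      using tendsto_add[OF f f] by (simp add: inner_add_right)
    moreover have "a + b \<in> M" using M(1) \<open>a \<in> M\<close> \<open>b \<in> M\<close> by (rule subspace_add)
    ultimately show "f (a + b) = f a + f b" using f LIMSEQ_unique by blast
  next
    fix a c assume "a \<in> M"
    then have "(\<lambda>j. inner (y j) (c *\<^sub>R a)) \<longlonglongrightarrow> c * f a" using tendsto_mult_left[OF f] by simp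
    moreover have "c *\<^sub>R a \<in> M" using M(1) \<open>a \<in> M\<close> by (rule subspace_scale)
    ultimately show "f (c *\<^sub>R a) = c * f a" using f LIMSEQ_unique by blast
  next
    fix a assume "a \<in> M"
    have "\<bar>inner (y j) a\<bar> \<le> R * norm a" for j
      using Cauchy_Schwarz_ineq2[of "y j" a] bound[of j] by (meson mult_right_mono norm_ge_zero order_trans)
    then show "\<bar>f a\<bar> \<le> R * norm a" using tendsto_rabs[OF f[OF \<open>a \<in> M\<close>]] by (intro LIMSEQ_le_const2) auto
  next
    show "0 \<le> R" using bound[of 0] norm_ge_zero order_trans by blast
  qed
  then obtain p where p: "p \<in> M" "\<And>v. v \<in> M \<Longrightarrow> f v = inner p v" by blast
  have "(\<lambda>j. inner (y j) d) \<longlonglongrightarrow> inner p d" for d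
  proof -
    obtain P where P: "P \<in> M" "\<And>v. v \<in> M \<Longrightarrow> inner (d - P) v = 0"
      using orthogonal_projection_closed_subspace[OF M] by blast
    have ortho: "inner v d = inner v P" if "v \<in> M" for v
      using P(2)[OF that] unfolding inner_diff_left by (simp add: inner_commute)
    have "inner (y j) d = inner (y j) P" for j using ortho[OF y_M] .
    moreover have "inner p d = inner p P" using ortho[OF p(1)] .
    ultimately show ?thesis using f[OF P(1)] p(2)[OF P(1)] by simp
  qed
  then show ?thesis unfolding weakly_converges_def by blast
qed

lemma bounded_seq_weakly_convergent_subseq:
  fixes x :: "nat \<Rightarrow> 'a::{real_inner,complete_space}"
  assumes bound: "\<And>k. norm (x k) \<le> R"
  obtains r p where "strict_mono r" "weakly_converges (x \<circ> r) p"
proof -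
  obtain r where r: "strict_mono r" "\<And>n. convergent (\<lambda>j. inner (x (r j)) (x n))"
    using bounded_seq_diagonal_inner_convergent[of x R, OF bound] by blast
  define M where "M = \<Inter>{T. closed T \<and> subspace T \<and> range x \<subseteq> T}"
  have M: "subspace M" "closed M" unfolding M_def by (auto intro: subspace_Inter closed_Inter)
  have "closed {d. convergent (\<lambda>j. inner ((x \<circ> r) j) d)}" using bound by (intro closed_inner_convergent) simp
  moreover have "range x \<subseteq> {d. convergent (\<lambda>j. inner ((x \<circ> r) j) d)}" using r(2) by auto
  ultimately have "M \<subseteq> {d. convergent (\<lambda>j. inner ((x \<circ> r) j) d)}"
    unfolding M_def using subspace_inner_convergent by blast
  moreover have "(x \<circ> r) j \<in> M" for j unfolding M_def by auto
  ultimately obtain p where "weakly_converges (x \<circ> r) p"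
    using weakly_convergent_if_convergent_on_closed_subspace[OF M, of "x \<circ> r" R] bound by auto
  with r(1) show ?thesis by (rule that)
qed

lemma not_LIMSEQ_imp_subseq_bounded_away:
  fixes f :: "nat \<Rightarrow> real"
  assumes "\<not> f \<longlonglongrightarrow> l"
  shows "\<exists>e>0. \<exists>s :: nat \<Rightarrow> nat. strict_mono s \<and> (\<forall>j. e \<le> \<bar>f (s j) - l\<bar>)"
proof -
  from assms obtain e where e: "e > 0" "\<And>N. \<exists>n\<ge>N. \<not> dist (f n) l < e"
    unfolding LIMSEQ_def by blast
  then have "infinite {n. e \<le> \<bar>f n - l\<bar>}"
    by (auto simp: infinite_nat_iff_unbounded_le dist_real_def not_less)
  from infinite_enumerate[OF this] obtain s :: "nat \<Rightarrow> nat"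
    where "strict_mono s" "\<forall>n. s n \<in> {n. e \<le> \<bar>f n - l\<bar>}" by blast
  with e(1) show ?thesis by auto
qed

lemma bounded_if_convergent_dist_power2:
  fixes x :: "nat \<Rightarrow> 'a::real_normed_vector"
  assumes "convergent (\<lambda>k. (norm (x k - p))\<^sup>2)"
  obtains R where "\<And>k. norm (x k) \<le> R"
proof -
  obtain K where K: "\<And>k. norm ((norm (x k - p))\<^sup>2) \<le> K"
    using convergent_imp_Bseq[OF assms] unfolding Bseq_def by auto
  have "norm (x k) \<le> norm p + sqrt K" for k
  proof -
    have "norm (x k - p) \<le> sqrt K" using K[of k] by (simp add: real_le_rsqrt)
    then show ?thesis using norm_triangle_sub[of "x k" p] by simp
  qed
  then show ?thesis by (rule that)
qed

lemma weak_subseq_limits_eq: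
  fixes x :: "nat \<Rightarrow> 'a::real_inner"
  assumes "convergent (\<lambda>k. (norm (x k - p))\<^sup>2)" "convergent (\<lambda>k. (norm (x k - q))\<^sup>2)"
    and r: "strict_mono r" "weakly_converges (x \<circ> r) p"
    and s: "strict_mono s" "weakly_converges (x \<circ> s) q"
  shows "p = q"
proof -
  have eq: "inner (x k) (q - p) =
      ((norm (x k - p))\<^sup>2 - (norm (x k - q))\<^sup>2 - (norm p)\<^sup>2 + (norm q)\<^sup>2) / 2" for k
    by (simp add: power2_norm_eq_inner inner_diff_left inner_diff_right inner_commute algebra_simps)
  obtain cp cq where "(\<lambda>k. (norm (x k - p))\<^sup>2) \<longlonglongrightarrow> cp" "(\<lambda>k. (norm (x k - q))\<^sup>2) \<longlonglongrightarrow> cq"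
    using assms(1,2) unfolding convergent_def by blast
  then have c: "(\<lambda>k. inner (x k) (q - p)) \<longlonglongrightarrow> (cp - cq - (norm p)\<^sup>2 + (norm q)\<^sup>2) / 2"
    (is "_ \<longlonglongrightarrow> ?c") unfolding eq by (intro tendsto_intros) auto
  have "(\<lambda>k. inner (x (r k)) (q - p)) \<longlonglongrightarrow> ?c"
    using LIMSEQ_subseq_LIMSEQ[OF c r(1)] by (simp add: o_def)
  moreover have "(\<lambda>k. inner (x (r k)) (q - p)) \<longlonglongrightarrow> inner p (q - p)"
    using r(2) unfolding weakly_converges_def by simp
  ultimately have cp: "?c = inner p (q - p)" by (rule LIMSEQ_unique)
  have "(\<lambda>k. inner (x (s k)) (q - p)) \<longlonglongrightarrow> ?c"
    using LIMSEQ_subseq_LIMSEQ[OF c s(1)] by (simp add: o_def)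
  moreover have "(\<lambda>k. inner (x (s k)) (q - p)) \<longlonglongrightarrow> inner q (q - p)"
    using s(2) unfolding weakly_converges_def by simp
  ultimately have "?c = inner q (q - p)" by (rule LIMSEQ_unique)
  with cp have "inner (q - p) (q - p) = 0" by (simp add: inner_diff_left)
  then show ?thesis by simp
qed

lemma opial:
  fixes x :: "nat \<Rightarrow> 'a::{real_inner,complete_space}"
  assumes "S \<noteq> {}"
    and fejer: "\<And>p. p \<in> S \<Longrightarrow> convergent (\<lambda>k. (norm (x k - p))\<^sup>2)"
    and cluster: "\<And>r q. strict_mono r \<Longrightarrow> weakly_converges (x \<circ> r) q \<Longrightarrow> q \<in> S"
  shows "\<exists>p\<in>S. weakly_converges x p"
proof -
  obtain p0 where "p0 \<in> S" using \<open>S \<noteq> {}\<close> by blast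
  obtain R where bound: "\<And>k. norm (x k) \<le> R"
    using bounded_if_convergent_dist_power2[of x p0, OF fejer[OF \<open>p0 \<in> S\<close>]] by blast
  obtain r p where r: "strict_mono r" "weakly_converges (x \<circ> r) p"
    using bounded_seq_weakly_convergent_subseq[of x R, OF bound] by blast
  have "p \<in> S" using cluster[OF r] .
  have "(\<lambda>k. inner (x k) d) \<longlonglongrightarrow> inner p d" for d
  proof (rule ccontr)
    assume "\<not> ?thesis"
    from not_LIMSEQ_imp_subseq_bounded_away[OF this] obtain e and s :: "nat \<Rightarrow> nat"
      where s: "0 < e" "strict_mono s" "\<forall>j. e \<le> \<bar>inner (x (s j)) d - inner p d\<bar>" by (elim exE conjE)
    have "\<And>k. norm ((x \<circ> s) k) \<le> R" using bound by simp
    then obtain r' q where r': "strict_mono r'" "weakly_converges (x \<circ> s \<circ> r') q"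
      using bounded_seq_weakly_convergent_subseq[of "x \<circ> s" R] by blast
    have sr': "strict_mono (s \<circ> r')" using s(2) r'(1) by (rule strict_mono_o)
    have sr'_lim: "weakly_converges (x \<circ> (s \<circ> r')) q" using r'(2) by (simp add: o_assoc)
    have "p = q"
      using weak_subseq_limits_eq[OF fejer[OF \<open>p \<in> S\<close>] fejer[OF cluster[OF sr' sr'_lim]] r sr' sr'_lim] .
    with r'(2) have "(\<lambda>j. inner (x (s (r' j))) d) \<longlonglongrightarrow> inner p d"
      unfolding weakly_converges_def by simp
    then have "(\<lambda>j. inner (x (s (r' j))) d - inner p d) \<longlonglongrightarrow> 0" by (rule LIM_zero)
    then have "(\<lambda>j. \<bar>inner (x (s (r' j))) d - inner p d\<bar>) \<longlonglongrightarrow> 0" by (rule tendsto_rabs_zero)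
    then have "e \<le> 0" using s(3) by (intro LIMSEQ_le_const) auto
    with s(1) show False by simp
  qed
  then show ?thesis using \<open>p \<in> S\<close> unfolding weakly_converges_def by blast
qed

section \<open>Maximally monotone operators\<close>

lemma maximal_monotone_imp_monotone: "maximal_monotone A \<Longrightarrow> monotone_op A"
  unfolding maximal_monotone_def by simp

lemma monotone_opD: "monotone_op A \<Longrightarrow> u \<in> A x \<Longrightarrow> v \<in> A y \<Longrightarrow> 0 \<le> inner (x - y) (u - v)"
  unfolding monotone_op_def by blast

lemma inner_diff_swap:
  fixes a b c d :: "'a::real_inner"
  shows "inner (a - b) (c - d) = inner (b - a) (d - c)"
  by (simp add: inner_diff_left inner_diff_right)

lemma maximal_monotone_memI:
  assumes maxA: "maximal_monotone A"
    and related: "\<And>y v. v \<in> A y \<Longrightarrow> 0 \<le> inner (z - y) (u - v)"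
  shows "u \<in> A z"
proof -
  define A' where "A' = (\<lambda>x. if x = z then insert u (A x) else A x)"
  have "monotone_op A'"
    unfolding monotone_op_def
  proof (intro allI impI)
    fix x y u' v' assume "u' \<in> A' x" "v' \<in> A' y"
    then consider "x = z" "u' = u" "y = z" "v' = u" | "x = z" "u' = u" "v' \<in> A y"
      | "y = z" "v' = u" "u' \<in> A x" | "u' \<in> A x" "v' \<in> A y"
      unfolding A'_def by (auto split: if_splits)
    then show "0 \<le> inner (x - y) (u' - v')"
    proof cases
      case 3
      then show ?thesis using related[of u' x] inner_diff_swap by metis
    next
      case 4
      then show ?thesis using maximal_monotone_imp_monotone[OF maxA] by (blast dest: monotone_opD)
    qed (use related in auto)
  qed
  moreover have "A x \<subseteq> A' x" for x unfolding A'_def by auto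
  ultimately have "A' = A" using maxA unfolding maximal_monotone_def by blast
  then have "A' z = A z" by simp
  then show ?thesis unfolding A'_def by auto
qed

lemma maximal_monotone_graph_nonempty:
  assumes "maximal_monotone A"
  shows "\<exists>y v. v \<in> A y"
proof (rule ccontr)
  assume "\<nexists>y v. v \<in> A y"
  moreover from this have "0 \<in> A 0" using maximal_monotone_memI[OF assms] by blast
  ultimately show False by blast
qed

text \<open>On triples \<open>(y, v, c)\<close> the form \<open>c\<^sub>1 + c\<^sub>2 - \<langle>y\<^sub>1, v\<^sub>2\<rangle> - \<langle>y\<^sub>2, v\<^sub>1\<rangle>\<close> is affine
  in each argument and equals \<open>\<langle>y\<^sub>1 - y\<^sub>2, v\<^sub>1 - v\<^sub>2\<rangle> \<ge> 0\<close> on graph triples. Its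
  nonnegativity therefore passes to the convex hull, one argument at a time, and on the
  diagonal it is the claim.\<close>
lemma inner_le_on_convex_hull_monotone_graph:
  fixes A :: "'a::real_inner \<Rightarrow> 'a set"
  assumes monA: "monotone_op A"
    and b: "b \<in> convex hull {(y, v, inner y v) | y v. v \<in> A y}"
  shows "inner (fst b) (fst (snd b)) \<le> snd (snd b)"
proof -
  define T where "T = {(y, v, inner y v) | y v. v \<in> A y}"
  define cross :: "'a \<times> 'a \<times> real \<Rightarrow> 'a \<times> 'a \<times> real \<Rightarrow> real" where
    "cross b1 b2 = snd (snd b1) + snd (snd b2) - inner (fst b1) (fst (snd b2)) - inner (fst b2) (fst (snd b1))"
    for b1 b2
  have convex_cross: "convex {b. 0 \<le> cross b0 b}" for b0
  proof (rule convexI)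
    fix b1 b2 :: "'a \<times> 'a \<times> real" and s t :: real
    assume "b1 \<in> {b. 0 \<le> cross b0 b}" "b2 \<in> {b. 0 \<le> cross b0 b}" "0 \<le> s" "0 \<le> t" "s + t = 1"
    moreover have "cross b0 (s *\<^sub>R b1 + t *\<^sub>R b2) = s * cross b0 b1 + t * cross b0 b2"
    proof -
      have "snd (snd b0) = (s + t) * snd (snd b0)" using \<open>s + t = 1\<close> by simp
      then show ?thesis unfolding cross_def by (simp add: inner_add_left inner_add_right algebra_simps)
    qed
    ultimately show "s *\<^sub>R b1 + t *\<^sub>R b2 \<in> {b. 0 \<le> cross b0 b}" by simp
  qed
  have "0 \<le> cross g b" if "g \<in> T" "b \<in> T" for g b
  proof -
    obtain y1 v1 where "g = (y1, v1, inner y1 v1)" "v1 \<in> A y1" using \<open>g \<in> T\<close> unfolding T_def by blast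
    moreover obtain y2 v2 where "b = (y2, v2, inner y2 v2)" "v2 \<in> A y2" using \<open>b \<in> T\<close> unfolding T_def by blast
    ultimately show ?thesis using monotone_opD[OF monA, of v1 y1 v2 y2]
      unfolding cross_def by (simp add: inner_diff_left inner_diff_right inner_commute)
  qed
  then have hull: "0 \<le> cross g b" if "g \<in> T" "b \<in> convex hull T" for g b
    using hull_minimal[of T "{b. 0 \<le> cross g b}" convex] convex_cross that by blast
  have "0 \<le> cross b b" if "b \<in> convex hull T" for b
  proof -
    have "cross g b = cross b g" for g unfolding cross_def by simp
    then have "T \<subseteq> {g. 0 \<le> cross b g}" using hull[OF _ that] by auto
    then have "convex hull T \<subseteq> {g. 0 \<le> cross b g}" using convex_cross by (rule hull_minimal)
    then show ?thesis using that by blast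
  qed
  from this[OF b[folded T_def]] show ?thesis unfolding cross_def by (simp add: inner_commute)
qed

text \<open>\<open>z\<close> is the limit of \<open>m\<close> along a minimizing sequence of \<open>\<parallel>m\<parallel>\<^sup>2 + l\<close>; the strong convexity of
  that function along \<open>m\<close> turns near-minimality into the bound.\<close>
lemma nonneg_affine_quadratic_common_center:
  fixes m :: "'b::real_vector \<Rightarrow> 'a::{real_inner,complete_space}" and l :: "'b \<Rightarrow> real"
  assumes H: "convex H" "H \<noteq> {}"
    and m_affine: "\<And>b1 b2 t. m (t *\<^sub>R b1 + (1 - t) *\<^sub>R b2) = t *\<^sub>R m b1 + (1 - t) *\<^sub>R m b2"
    and l_affine: "\<And>b1 b2 t. l (t *\<^sub>R b1 + (1 - t) *\<^sub>R b2) = t * l b1 + (1 - t) * l b2"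
    and nonneg: "\<And>b. b \<in> H \<Longrightarrow> 0 \<le> (norm (m b))\<^sup>2 + l b"
  shows "\<exists>z. \<forall>b\<in>H. (norm (m b - z))\<^sup>2 \<le> (norm (m b))\<^sup>2 + l b"
proof -
  define h where "h b = (norm (m b))\<^sup>2 + l b" for b
  have h_comb: "h (t *\<^sub>R b1 + (1 - t) *\<^sub>R b2) = t * h b1 + (1 - t) * h b2 - t * (1 - t) * (norm (m b1 - m b2))\<^sup>2"
    for b1 b2 t
    unfolding h_def m_affine l_affine norm_convex_comb_power2 by (simp add: algebra_simps)
  have comb_in: "t *\<^sub>R b1 + (1 - t) *\<^sub>R b2 \<in> H" if "b1 \<in> H" "b2 \<in> H" "0 \<le> t" "t \<le> 1" for b1 b2 t
    using H(1) that by (intro convexD) auto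
  have bdd: "bdd_below (h ` H)" using nonneg unfolding h_def by (intro bdd_belowI2)
  have "\<exists>c\<in>H. h c \<le> (h a + h b) / 2 - (norm (m a - m b))\<^sup>2 / 4" if "a \<in> H" "b \<in> H" for a b
    using h_comb[of "1/2" a b] comb_in[OF that, of "1/2"] by (intro bexI[of _ "(1/2) *\<^sub>R a + (1 - 1/2) *\<^sub>R b"]) auto
  then obtain f z where f: "\<And>n. f n \<in> H" "(\<lambda>n. h (f n)) \<longlonglongrightarrow> Inf (h ` H)" "(\<lambda>n. m (f n)) \<longlonglongrightarrow> z"
    using minimizing_sequence_convergent[of H h m] H(2) bdd by blast
  define s where "s = Inf (h ` H)"
  have s_le: "s \<le> h c" if "c \<in> H" for c unfolding s_def using bdd that by (simp add: cInf_lower)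
  have "0 \<le> s" unfolding s_def
    using f(1) nonneg unfolding h_def by (intro LIMSEQ_le_const[OF f(2)[unfolded h_def]]) auto
  have center: "(norm (m g - z))\<^sup>2 \<le> h g - s" if "g \<in> H" for g
  proof (rule field_le_mult_one_interval)
    fix t :: real assume "0 < t" "t < 1"
    define t' where "t' = 1 - t"
    have "s \<le> t' * h g + (1 - t') * h (f n) - t' * (1 - t') * (norm (m g - m (f n)))\<^sup>2" for n
    proof -
      have "t' *\<^sub>R g + (1 - t') *\<^sub>R f n \<in> H"
        using comb_in[OF that f(1), of t'] \<open>0 < t\<close> \<open>t < 1\<close> unfolding t'_def by simp
      then show ?thesis unfolding h_comb[symmetric] by (rule s_le)
    qed
    moreover have "(\<lambda>n. t' * h g + (1 - t') * h (f n) - t' * (1 - t') * (norm (m g - m (f n)))\<^sup>2)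
        \<longlonglongrightarrow> t' * h g + (1 - t') * s - t' * (1 - t') * (norm (m g - z))\<^sup>2"
      using f(2,3) unfolding s_def by (intro tendsto_intros)
    ultimately have "s \<le> t' * h g + (1 - t') * s - t' * (1 - t') * (norm (m g - z))\<^sup>2"
      by (intro LIMSEQ_le_const) auto
    then have "t' * (t * (norm (m g - z))\<^sup>2) \<le> t' * (h g - s)" unfolding t'_def by (simp add: algebra_simps)
    then show "t * (norm (m g - z))\<^sup>2 \<le> h g - s" using \<open>t < 1\<close> unfolding t'_def by simp
  qed
  show ?thesis
  proof (intro exI[of _ z] ballI)
    fix b assume "b \<in> H"
    from center[OF this] \<open>0 \<le> s\<close> show "(norm (m b - z))\<^sup>2 \<le> (norm (m b))\<^sup>2 + l b"
      unfolding h_def by linarith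
  qed
qed

text \<open>\<open>z\<close> lies in every ball with diameter \<open>[y, w - \<lambda> v]\<close>, \<open>v \<in> A y\<close>, exactly when
  \<open>(w - z) / \<lambda>\<close> is monotonically related to the graph of \<open>A\<close> at \<open>z\<close>. Such a \<open>z\<close> is a common
  center, in the sense of nonneg_affine_quadratic_common_center, of the convex hull of the
  triples \<open>(y, v, \<langle>y, v\<rangle>)\<close>, \<open>v \<in> A y\<close>.\<close>
lemma minty_surjectivity:
  fixes A :: "'a::{real_inner,complete_space} \<Rightarrow> 'a set"
  assumes maxA: "maximal_monotone A" and lam: "0 < lam"
  shows "\<exists>z u. u \<in> A z \<and> w = z + lam *\<^sub>R u"
proof -
  define H where "H = convex hull {(y, v, inner y v) | y v. v \<in> A y}"
  define m where "m b = (1/2) *\<^sub>R (fst b + w - lam *\<^sub>R fst (snd b))" for b :: "'a \<times> 'a \<times> real"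
  define l where "l b = lam * snd (snd b) - inner (fst b) w" for b :: "'a \<times> 'a \<times> real"
  have m_triple: "m (y, v, c) = (1/2) *\<^sub>R (y + (w - lam *\<^sub>R v))" for y v c
    unfolding m_def by (simp add: algebra_simps)
  have h_triple: "(norm (m (y, v, c)))\<^sup>2 + l (y, v, c) =
      (norm ((1/2) *\<^sub>R (y - (w - lam *\<^sub>R v))))\<^sup>2 + lam * (c - inner y v)" for y v c
    using norm_midpoint_diff_power2[of y "w - lam *\<^sub>R v" 0] unfolding m_triple l_def
    by (simp add: inner_diff_right algebra_simps)
  have "\<exists>z. \<forall>b\<in>H. (norm (m b - z))\<^sup>2 \<le> (norm (m b))\<^sup>2 + l b"
  proof (rule nonneg_affine_quadratic_common_center)
    show "convex H" unfolding H_def by (rule convex_convex_hull)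
    obtain y v where "v \<in> A y" using maximal_monotone_graph_nonempty[OF maxA] by blast
    then have "(y, v, inner y v) \<in> H" unfolding H_def by (blast intro: hull_inc)
    then show "H \<noteq> {}" by blast
    show "m (t *\<^sub>R b1 + (1 - t) *\<^sub>R b2) = t *\<^sub>R m b1 + (1 - t) *\<^sub>R m b2" for b1 b2 t
      unfolding m_def by (simp add: algebra_simps diff_divide_distrib)
    show "l (t *\<^sub>R b1 + (1 - t) *\<^sub>R b2) = t * l b1 + (1 - t) * l b2" for b1 b2 t
      unfolding l_def by (simp add: inner_add_left algebra_simps)
    fix b assume "b \<in> H"
    moreover obtain y v c where "b = (y, v, c)" by (metis prod_cases3)
    ultimately have "inner y v \<le> c"
      using inner_le_on_convex_hull_monotone_graph[OF maximal_monotone_imp_monotone[OF maxA]]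
      unfolding H_def by fastforce
    then show "0 \<le> (norm (m b))\<^sup>2 + l b" using lam \<open>b = (y, v, c)\<close> h_triple by simp
  qed
  then obtain z where z: "\<And>b. b \<in> H \<Longrightarrow> (norm (m b - z))\<^sup>2 \<le> (norm (m b))\<^sup>2 + l b" by blast
  define u where "u = (1 / lam) *\<^sub>R (w - z)"
  have w: "w = z + lam *\<^sub>R u" unfolding u_def using lam by simp
  have "u \<in> A z"
  proof (rule maximal_monotone_memI[OF maxA])
    fix y v assume "v \<in> A y"
    then have "(y, v, inner y v) \<in> H" unfolding H_def by (blast intro: hull_inc)
    from z[OF this] have "inner (z - y) (z - (w - lam *\<^sub>R v)) \<le> 0"
      unfolding h_triple unfolding m_triple norm_midpoint_diff_power2 by simp
    moreover have "z - (w - lam *\<^sub>R v) = - lam *\<^sub>R (u - v)" using w by (simp add: algebra_simps)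
    ultimately show "0 \<le> inner (z - y) (u - v)" using lam by (simp add: zero_le_mult_iff)
  qed
  with w show ?thesis by blast
qed

lemma monotone_resolvent_unique:
  assumes "monotone_op A" "0 < lam" "u \<in> A z" "u' \<in> A z'" "z + lam *\<^sub>R u = z' + lam *\<^sub>R u'"
  shows "z = z'"
proof -
  have "0 \<le> lam * inner (z - z') (u - u')" using monotone_opD[OF assms(1,3,4)] assms(2) by simp
  also have "lam * inner (z - z') (u - u') = inner (z - z') (lam *\<^sub>R (u - u'))" by simp
  also have "lam *\<^sub>R (u - u') = - (z - z')" using assms(5) by (simp add: algebra_simps)
  also have "inner (z - z') (- (z - z')) = - (norm (z - z'))\<^sup>2"
    by (simp only: inner_minus_right power2_norm_eq_inner)
  finally show ?thesis by simp
qed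

lemma resolvent_characterization:
  fixes A :: "'a::{real_inner,complete_space} \<Rightarrow> 'a set"
  assumes "maximal_monotone A" "0 < lam"
  shows "\<exists>u\<in>A (resolvent lam A w). w = resolvent lam A w + lam *\<^sub>R u"
proof -
  obtain z u where zu: "u \<in> A z" "w = z + lam *\<^sub>R u" using minty_surjectivity[OF assms] by blast
  have "resolvent lam A w = z"
    unfolding resolvent_def
  proof (rule the_equality)
    show "\<exists>u\<in>A z. w = z + lam *\<^sub>R u" using zu by blast
    fix z' assume "\<exists>u'\<in>A z'. w = z' + lam *\<^sub>R u'"
    then obtain u' where u': "u' \<in> A z'" "z' + lam *\<^sub>R u' = z + lam *\<^sub>R u" using zu(2) by auto
    show "z' = z"
      by (rule monotone_resolvent_unique[OF maximal_monotone_imp_monotone[OF assms(1)] assms(2)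
            u'(1) zu(1) u'(2)])
  qed
  with zu show ?thesis by auto
qed

lemma weak_limit_monotone_related:
  fixes A :: "'a::real_inner \<Rightarrow> 'a set" and B :: "'a \<Rightarrow> 'a"
  assumes monA: "monotone_op A" and monB: "\<And>x y. 0 \<le> inner (x - y) (B x - B y)"
    and a: "\<And>k. a k \<in> A (z k)"
    and zx: "(\<lambda>k. z k - x k) \<longlonglongrightarrow> 0" and residual: "(\<lambda>k. a k + B (z k)) \<longlonglongrightarrow> 0"
    and weak: "weakly_converges x q" and bound: "\<And>k. norm (x k) \<le> R"
    and "v \<in> A y"
  shows "0 \<le> inner (q - y) (- (v + B y))"
proof -
  define r where "r k = a k + B (z k)" for k
  define c where "c = - (v + B y)"
  have split: "inner (z k - y) (a k - v) + inner (z k - y) (B (z k) - B y) =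
      (inner (x k) c - inner y c) + inner (z k - x k) c + inner (z k - x k) (r k) + inner (x k - y) (r k)"
    for k unfolding r_def c_def by (simp add: inner_add_right inner_diff_right inner_diff_left algebra_simps)
  have ineq: "0 \<le> (inner (x k) c - inner y c) + inner (z k - x k) c + inner (z k - x k) (r k)
      + inner (x k - y) (r k)" for k
    using monotone_opD[OF monA a \<open>v \<in> A y\<close>] monB[of "z k" y] unfolding split[symmetric] by simp
  have r0: "r \<longlonglongrightarrow> 0" unfolding r_def by (rule residual)
  have "norm (x k - y) \<le> R + norm y" for k using bound[of k] norm_triangle_ineq4[of "x k" y] by simp
  then have "(\<lambda>k. inner (r k) (x k - y)) \<longlonglongrightarrow> 0" by (rule inner_tendsto_zero_if_bounded[OF r0])
  then have "(\<lambda>k. inner (x k - y) (r k)) \<longlonglongrightarrow> 0" by (simp add: inner_commute)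
  moreover have "(\<lambda>k. inner (x k) c) \<longlonglongrightarrow> inner q c" using weak unfolding weakly_converges_def by blast
  moreover have "(\<lambda>k. inner (z k - x k) c) \<longlonglongrightarrow> inner 0 c" using zx by (intro tendsto_inner tendsto_const)
  moreover have "(\<lambda>k. inner (z k - x k) (r k)) \<longlonglongrightarrow> inner 0 0" using tendsto_inner[OF zx r0] by simp
  ultimately have "(\<lambda>k. (inner (x k) c - inner y c) + inner (z k - x k) c + inner (z k - x k) (r k)
      + inner (x k - y) (r k)) \<longlonglongrightarrow> (inner q c - inner y c) + inner 0 c + inner 0 0 + 0"
    by (intro tendsto_add tendsto_diff tendsto_const)
  with ineq have "0 \<le> (inner q c - inner y c) + inner 0 c + inner 0 0 + 0" by (intro LIMSEQ_le_const) auto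
  then show ?thesis unfolding c_def by (simp add: inner_diff_left)
qed

text \<open>With \<open>g = 1 / (2 L)\<close>, Minty provides \<open>y\<^sub>0 + g u\<^sub>0 = q - g B q\<close>, \<open>u\<^sub>0 \<in> A y\<^sub>0\<close>; the monotone
  relation at \<open>(y\<^sub>0, u\<^sub>0)\<close> then gives \<open>\<parallel>q - y\<^sub>0\<parallel>\<^sup>2 \<le> g \<langle>q - y\<^sub>0, B q - B y\<^sub>0\<rangle> \<le> \<parallel>q - y\<^sub>0\<parallel>\<^sup>2 / 2\<close>.\<close>
lemma zeros_sum_if_monotone_related:
  fixes A :: "'a::{real_inner,complete_space} \<Rightarrow> 'a set" and B :: "'a \<Rightarrow> 'a"
  assumes maxA: "maximal_monotone A" and L: "0 < L"
    and lipB: "\<And>x y. norm (B x - B y) \<le> L * norm (x - y)"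
    and related: "\<And>y v. v \<in> A y \<Longrightarrow> 0 \<le> inner (q - y) (- (v + B y))"
  shows "q \<in> zeros_sum A B"
proof -
  define g where "g = 1 / (2 * L)"
  have g: "0 < g" unfolding g_def using L by simp
  obtain y0 u0 where yu: "u0 \<in> A y0" "q - g *\<^sub>R B q = y0 + g *\<^sub>R u0"
    using minty_surjectivity[OF maxA g] by blast
  have "g *\<^sub>R (- (u0 + B y0)) = g *\<^sub>R (B q - B y0) - (q - y0)"
    using yu(2) by (simp add: algebra_simps)
  then have "g * inner (q - y0) (- (u0 + B y0)) = g * inner (q - y0) (B q - B y0) - inner (q - y0) (q - y0)"
    by (metis inner_diff_right inner_scaleR_right)
  moreover have "0 \<le> g * inner (q - y0) (- (u0 + B y0))" using g related[OF yu(1)] by simp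
  moreover have "inner (q - y0) (B q - B y0) \<le> L * (norm (q - y0))\<^sup>2"
  proof -
    have "inner (q - y0) (B q - B y0) \<le> norm (q - y0) * norm (B q - B y0)" by (rule norm_cauchy_schwarz)
    also have "\<dots> \<le> norm (q - y0) * (L * norm (q - y0))" by (intro mult_left_mono lipB) simp
    finally show ?thesis by (simp add: power2_eq_square algebra_simps)
  qed
  then have "g * inner (q - y0) (B q - B y0) \<le> (norm (q - y0))\<^sup>2 / 2"
    using mult_left_mono[OF _ less_imp_le[OF g]] L unfolding g_def by fastforce
  ultimately have "(norm (q - y0))\<^sup>2 \<le> 0" by (simp add: power2_norm_eq_inner)
  then have "q = y0" by simp
  with yu(2) have "g *\<^sub>R u0 = g *\<^sub>R (- B q)" by (auto simp: algebra_simps eq_neg_iff_add_eq_0)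
  then have "u0 = - B q" using g by (metis less_irrefl scaleR_cancel_left)
  with yu(1) \<open>q = y0\<close> have "- B q \<in> A q" by simp
  then show ?thesis unfolding zeros_sum_def by force
qed

lemma cocoercive_imp_lipschitz:
  assumes co: "cocoercive (1 / L) B" and "0 < L"
  shows "L-lipschitz_on UNIV B"
proof (rule lipschitz_onI)
  fix u v
  have "(1 / L) * (norm (B u - B v))\<^sup>2 \<le> inner (u - v) (B u - B v)"
    using co unfolding cocoercive_def by blast
  also have "\<dots> \<le> norm (u - v) * norm (B u - B v)" by (rule norm_cauchy_schwarz)
  finally have "norm (B u - B v) * norm (B u - B v) \<le> L * norm (u - v) * norm (B u - B v)"
    using \<open>0 < L\<close> by (simp add: power2_eq_square field_simps)
  then have "norm (B u - B v) \<le> L * norm (u - v)"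
    using \<open>0 < L\<close> by (cases "B u = B v") (auto simp: mult_le_cancel_right)
  then show "dist (B u) (B v) \<le> L * dist u v" by (simp add: dist_norm)
qed (use \<open>0 < L\<close> in simp)

section \<open>The Lyapunov argument\<close>

lemma bounded_if_contraction_step:
  fixes h :: "nat \<Rightarrow> real"
  assumes "0 \<le> rho" "rho < 1" and step: "\<And>n. h (Suc n) \<le> rho * h n + K"
  shows "h n \<le> max (h 0) (K / (1 - rho))"
proof (induction n)
  case (Suc n)
  have "h (Suc n) \<le> rho * max (h 0) (K / (1 - rho)) + K"
    using step[of n] Suc mult_left_mono[OF Suc \<open>0 \<le> rho\<close>] by linarith
  also have "\<dots> \<le> max (h 0) (K / (1 - rho))"
  proof -
    have "K \<le> (1 - rho) * max (h 0) (K / (1 - rho))"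
      using \<open>rho < 1\<close> by (simp add: max_def field_simps)
    then show ?thesis by (simp add: algebra_simps)
  qed
  finally show ?case .
qed simp

lemma summable_if_decrements_bounded:
  fixes Phi g :: "nat \<Rightarrow> real"
  assumes descent: "\<And>n. Phi (Suc n) + g n \<le> Phi n"
    and "\<And>n. 0 \<le> g n" and lower: "\<And>n. b \<le> Phi n"
  shows "summable g"
proof (rule summableI_nonneg_bounded)
  fix N
  have "(\<Sum>k<N. g k) \<le> Phi 0 - Phi N"
  proof (induction N)
    case (Suc N)
    then show ?case using descent[of N] by simp
  qed simp
  then show "(\<Sum>k<N. g k) \<le> Phi 0 - b" using lower[of N] by linarith
qed fact

lemma lyapunov_descent_limits:
  fixes Phi h D psi :: "nat \<Rightarrow> real"
  assumes "0 < beta" "0 \<le> rho" "rho < 1" "0 < eps" "0 < c"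
    and descent: "\<And>n. Phi (Suc n) + eps * D (Suc n) + c * psi (Suc n) \<le> Phi n"
    and lower: "\<And>n. beta * (h (Suc n) - rho * h n) \<le> Phi n"
    and nonneg: "\<And>n. 0 \<le> h n" "\<And>n. 0 \<le> D n" "\<And>n. 0 \<le> psi n"
  obtains M where "\<And>n. h n \<le> M" "D \<longlonglongrightarrow> 0" "psi \<longlonglongrightarrow> 0" "convergent Phi"
proof -
  have dec: "Phi (Suc n) \<le> Phi n" for n
    using descent[of n] nonneg(2,3)[of "Suc n"] \<open>0 < eps\<close> \<open>0 < c\<close>
    by (smt (verit) mult_nonneg_nonneg)
  have Phi_le: "Phi n \<le> Phi 0" for n by (induction n) (use dec order_trans in auto)
  have "h (Suc n) \<le> rho * h n + Phi 0 / beta" for n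
    using lower[of n] Phi_le[of n] \<open>0 < beta\<close> by (simp add: field_simps)
  then obtain M where M: "\<And>n. h n \<le> M"
    using bounded_if_contraction_step[OF \<open>0 \<le> rho\<close> \<open>rho < 1\<close>] by blast
  have Phi_lower: "- (beta * rho * M) \<le> Phi n" for n
  proof -
    have "beta * (rho * h n) \<le> beta * (rho * M)"
      using M \<open>0 \<le> rho\<close> \<open>0 < beta\<close> by (simp add: mult_left_mono)
    moreover have "0 \<le> beta * h (Suc n)" using nonneg(1) \<open>0 < beta\<close> by simp
    ultimately show ?thesis using lower[of n] by (simp add: algebra_simps)
  qed
  define g where "g n = eps * D (Suc n) + c * psi (Suc n)" for n
  have "summable g"
    using summable_if_decrements_bounded[of Phi g, OF _ _ Phi_lower] descent nonneg \<open>0 < eps\<close> \<open>0 < c\<close>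
    unfolding g_def by (simp add: add.assoc)
  then have g0: "g \<longlonglongrightarrow> 0" by (rule summable_LIMSEQ_zero)
  have "(\<lambda>n. D (Suc n)) \<longlonglongrightarrow> 0"
    by (rule tendsto_0_le[OF g0, of _ "1 / eps"])
      (use nonneg \<open>0 < eps\<close> \<open>0 < c\<close> in \<open>simp add: g_def field_simps\<close>)
  moreover have "(\<lambda>n. psi (Suc n)) \<longlonglongrightarrow> 0"
    by (rule tendsto_0_le[OF g0, of _ "1 / c"])
      (use nonneg \<open>0 < eps\<close> \<open>0 < c\<close> in \<open>simp add: g_def field_simps\<close>)
  moreover have "convergent Phi"
  proof (rule Bseq_monoseq_convergent)
    have "norm (Phi n) \<le> \<bar>Phi 0\<bar> + \<bar>beta * rho * M\<bar>" for n
      using Phi_le[of n] Phi_lower[of n] unfolding real_norm_def by arith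
    then show "Bseq Phi" by (rule BseqI')
    show "monoseq Phi" unfolding monoseq_Suc using dec by blast
  qed
  ultimately show ?thesis using M that by (metis LIMSEQ_imp_Suc)
qed

lemma convergent_if_inertial_combination_convergent:
  fixes h :: "nat \<Rightarrow> real"
  assumes "alpha \<noteq> 1" and "convergent (\<lambda>n. h (Suc n) - alpha * h n)"
    and "(\<lambda>n. h (Suc n) - h n) \<longlonglongrightarrow> 0"
  shows "convergent h"
proof -
  obtain l where "(\<lambda>n. h (Suc n) - alpha * h n) \<longlonglongrightarrow> l" using assms(2) by (auto simp: convergent_def)
  then have "(\<lambda>n. ((h (Suc n) - alpha * h n) - alpha * (h (Suc n) - h n)) / (1 - alpha))
      \<longlonglongrightarrow> (l - alpha * 0) / (1 - alpha)"
    using assms(1,3) by (intro tendsto_intros) auto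
  moreover have "((h (Suc n) - alpha * h n) - alpha * (h (Suc n) - h n)) / (1 - alpha) = h (Suc n)" for n
    using assms(1) by (simp add: field_simps)
  ultimately have "(\<lambda>n. h (Suc n)) \<longlonglongrightarrow> l / (1 - alpha)" by simp
  then show ?thesis using LIMSEQ_imp_Suc convergent_def by blast
qed

definition frb_energy :: "real \<Rightarrow> real \<Rightarrow> real \<Rightarrow> real \<Rightarrow> 'a::real_inner \<Rightarrow> 'a \<Rightarrow> 'a \<Rightarrow> real" where
  "frb_energy alpha beta lam kappa u' u e =
     beta * ((norm u')\<^sup>2 - alpha * (norm u)\<^sup>2) + 2 * lam * beta * inner u' e + kappa * (norm (u' - u))\<^sup>2"

lemma frb_energy_descent:
  fixes a b c eb ec :: "'a::real_inner"
  assumes step: "0 \<le> inner (a - (1 - beta) *\<^sub>R b)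
      (- (a - b) + alpha *\<^sub>R (b - c) - (lam * (1 + beta)) *\<^sub>R eb + lam *\<^sub>R ec)"
    and cross: "2 * alpha * inner (a - b) (b - c) - 2 * lam * inner (a - b) (eb - ec)
      \<le> (alpha + m) * ((norm (a - b))\<^sup>2 + (norm (b - c))\<^sup>2)"
  shows "frb_energy alpha beta lam (alpha + m + alpha * beta) a b eb
      + (2 - beta - 2 * alpha - alpha * beta - 2 * m) * (norm (a - b))\<^sup>2 + 2 * lam * beta\<^sup>2 * inner b eb
    \<le> frb_energy alpha beta lam (alpha + m + alpha * beta) b c ec"
proof -
  have "frb_energy alpha beta lam (alpha + m + alpha * beta) b c ec
      - (frb_energy alpha beta lam (alpha + m + alpha * beta) a b eb
        + (2 - beta - 2 * alpha - alpha * beta - 2 * m) * (norm (a - b))\<^sup>2 + 2 * lam * beta\<^sup>2 * inner b eb)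
    = 2 * inner (a - (1 - beta) *\<^sub>R b) (- (a - b) + alpha *\<^sub>R (b - c) - (lam * (1 + beta)) *\<^sub>R eb + lam *\<^sub>R ec)
      + ((alpha + m) * ((norm (a - b))\<^sup>2 + (norm (b - c))\<^sup>2)
        - (2 * alpha * inner (a - b) (b - c) - 2 * lam * inner (a - b) (eb - ec)))"
    unfolding frb_energy_def power2_norm_eq_inner
    by (simp add: inner_add_left inner_add_right inner_diff_left inner_diff_right
        inner_commute algebra_simps power2_eq_square)
  with step cross show ?thesis by simp
qed

lemma cross_term_bound_lipschitz:
  fixes d d' e :: "'a::real_inner"
  assumes e: "norm e \<le> L * norm d" and "0 \<le> alpha" "0 \<le> lam" "0 \<le> L"
  shows "2 * alpha * inner d' d - 2 * lam * inner d' e \<le> (alpha + lam * L) * ((norm d')\<^sup>2 + (norm d)\<^sup>2)"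
proof -
  have "2 * inner d' d \<le> (norm d')\<^sup>2 + (norm d)\<^sup>2" using two_inner_le_weighted[of 1 d' d] by simp
  then have a: "alpha * (2 * inner d' d) \<le> alpha * ((norm d')\<^sup>2 + (norm d)\<^sup>2)"
    using \<open>0 \<le> alpha\<close> by (rule mult_left_mono)
  have "- inner d' e \<le> norm d' * norm e" using norm_cauchy_schwarz[of d' "- e"] by simp
  also have "\<dots> \<le> norm d' * (L * norm d)" using e by (simp add: mult_left_mono)
  finally have "2 * (- inner d' e) \<le> L * (2 * norm d' * norm d)" by (simp add: algebra_simps)
  also have "\<dots> \<le> L * ((norm d')\<^sup>2 + (norm d)\<^sup>2)"
    using sum_squares_bound[of "norm d'" "norm d"] \<open>0 \<le> L\<close> by (simp add: mult_left_mono)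
  finally have "lam * (2 * (- inner d' e)) \<le> lam * (L * ((norm d')\<^sup>2 + (norm d)\<^sup>2))"
    using \<open>0 \<le> lam\<close> by (rule mult_left_mono)
  with a show ?thesis by (simp add: algebra_simps)
qed

lemma cocoercive_inner_lower_bound:
  fixes d d' e :: "'a::real_inner"
  assumes co: "(1 / L) * (norm e)\<^sup>2 \<le> inner d e" and "0 < L"
  shows "- (L / 4) * (norm (d' - d))\<^sup>2 \<le> inner d' e"
proof -
  have "2 * inner (d' - d) (- e) \<le> (L / 2) * (norm (d' - d))\<^sup>2 + (norm (- e))\<^sup>2 / (L / 2)"
    using \<open>0 < L\<close> by (intro two_inner_le_weighted) simp
  then have "- inner (d' - d) e \<le> (L / 4) * (norm (d' - d))\<^sup>2 + (1 / L) * (norm e)\<^sup>2"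
    by (simp add: field_simps)
  then show ?thesis using co by (simp add: inner_diff_left)
qed

lemma cross_term_bound_cocoercive:
  fixes d d' e :: "'a::real_inner"
  assumes co: "(1 / L) * (norm e)\<^sup>2 \<le> inner d e" and "0 < L" "0 \<le> alpha" "0 \<le> lam"
  shows "2 * alpha * inner d' d - 2 * lam * inner d' e
    \<le> (alpha + max 0 (lam * L - 2 * alpha)) * ((norm d')\<^sup>2 + (norm d)\<^sup>2)"
proof -
  define N where "N = (norm d')\<^sup>2 + (norm d)\<^sup>2"
  define D where "D = (norm (d' - d))\<^sup>2"
  have "2 * inner d' d = N - D" unfolding N_def D_def power2_norm_eq_inner
    by (simp add: inner_diff_left inner_diff_right inner_commute)
  then have "alpha * (2 * inner d' d) = alpha * (N - D)" by simp
  then have "2 * alpha * inner d' d = alpha * N - alpha * D" by (simp add: algebra_simps)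
  moreover have "- (2 * lam * inner d' e) \<le> lam * L / 2 * D"
    using mult_left_mono[OF cocoercive_inner_lower_bound[OF co \<open>0 < L\<close>, of d'], of "2 * lam"] \<open>0 \<le> lam\<close>
    unfolding D_def by (simp add: algebra_simps)
  moreover have "(lam * L / 2 - alpha) * D \<le> max 0 (lam * L - 2 * alpha) * N"
  proof -
    have "D \<le> 2 * N"
      using two_inner_le_weighted[of 1 d' "- d"] unfolding N_def D_def power2_norm_eq_inner
      by (simp add: inner_diff_left inner_diff_right inner_commute)
    have "0 \<le> D" "0 \<le> N" unfolding N_def D_def by simp_all
    show ?thesis
    proof (cases "lam * L / 2 \<le> alpha")
      case True
      then have "(lam * L / 2 - alpha) * D \<le> 0" using \<open>0 \<le> D\<close> by (simp add: mult_nonpos_nonneg)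
      moreover have "0 \<le> max 0 (lam * L - 2 * alpha) * N" using \<open>0 \<le> N\<close> by simp
      ultimately show ?thesis by linarith
    next
      case False
      then have "(lam * L / 2 - alpha) * D \<le> (lam * L / 2 - alpha) * (2 * N)"
        using \<open>D \<le> 2 * N\<close> by (intro mult_left_mono) auto
      also have "\<dots> = (lam * L - 2 * alpha) * N" by (simp add: algebra_simps)
      also have "\<dots> \<le> max 0 (lam * L - 2 * alpha) * N"
        using \<open>0 \<le> N\<close> by (intro mult_right_mono) auto
      finally show ?thesis .
    qed
  qed
  then have "lam * L / 2 * D - alpha * D \<le> max 0 (lam * L - 2 * alpha) * N" by (simp add: algebra_simps)
  ultimately have "2 * alpha * inner d' d - 2 * lam * inner d' e
      \<le> alpha * N + max 0 (lam * L - 2 * alpha) * N"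
    by linarith
  then show ?thesis unfolding N_def by (simp add: algebra_simps)
qed

lemma frb_energy_lower_bound_lipschitz:
  fixes u u' e :: "'a::real_inner"
  assumes e: "norm e \<le> L * norm u" and "0 \<le> inner u e" and "0 \<le> beta" "0 \<le> lam" "0 \<le> L" "0 \<le> alpha"
  shows "beta * ((norm u')\<^sup>2 - (alpha + lam * L * beta) * (norm u)\<^sup>2)
    \<le> frb_energy alpha beta lam (alpha + lam * L + alpha * beta) u' u e"
proof -
  have "- inner (u' - u) e \<le> norm (u' - u) * norm e" using norm_cauchy_schwarz[of "u' - u" "- e"] by simp
  also have "\<dots> \<le> L * (norm (u' - u) * norm u)"
    using mult_left_mono[OF e norm_ge_zero[of "u' - u"]] by (simp add: algebra_simps)
  finally have "- inner u' e \<le> L * (norm (u' - u) * norm u)"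
    using \<open>0 \<le> inner u e\<close> by (simp add: inner_diff_left)
  then have "(2 * lam * beta) * (- inner u' e) \<le> (2 * lam * beta) * (L * (norm (u' - u) * norm u))"
    using \<open>0 \<le> lam\<close> \<open>0 \<le> beta\<close> by (intro mult_left_mono) auto
  then have "- (2 * lam * beta * inner u' e) \<le> lam * L * (2 * norm (u' - u) * (beta * norm u))"
    by (simp add: algebra_simps)
  also have "\<dots> \<le> lam * L * ((norm (u' - u))\<^sup>2 + (beta * norm u)\<^sup>2)"
    using sum_squares_bound[of "norm (u' - u)" "beta * norm u"] \<open>0 \<le> lam\<close> \<open>0 \<le> L\<close>
    by (simp add: mult_left_mono)
  finally have "0 \<le> 2 * lam * beta * inner u' e + lam * L * ((norm (u' - u))\<^sup>2 + (beta * norm u)\<^sup>2)"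
    by simp
  moreover have "0 \<le> (alpha + alpha * beta) * (norm (u' - u))\<^sup>2" using \<open>0 \<le> alpha\<close> \<open>0 \<le> beta\<close> by simp
  moreover have "frb_energy alpha beta lam (alpha + lam * L + alpha * beta) u' u e
      - beta * ((norm u')\<^sup>2 - (alpha + lam * L * beta) * (norm u)\<^sup>2)
    = (2 * lam * beta * inner u' e + lam * L * ((norm (u' - u))\<^sup>2 + (beta * norm u)\<^sup>2))
      + (alpha + alpha * beta) * (norm (u' - u))\<^sup>2"
    unfolding frb_energy_def by (simp add: algebra_simps power_mult_distrib power2_eq_square)
  ultimately show ?thesis by simp
qed

lemma frb_energy_lower_bound_cocoercive:
  fixes u u' e :: "'a::real_inner"
  assumes co: "(1 / L) * (norm e)\<^sup>2 \<le> inner u e" and "0 < L" "0 \<le> beta" "0 \<le> lam"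
    and kappa: "lam * beta * L / 2 \<le> kappa"
  shows "beta * ((norm u')\<^sup>2 - alpha * (norm u)\<^sup>2) \<le> frb_energy alpha beta lam kappa u' u e"
proof -
  have "- (2 * lam * beta) * ((L / 4) * (norm (u' - u))\<^sup>2) \<le> 2 * lam * beta * inner u' e"
    using mult_left_mono[OF cocoercive_inner_lower_bound[OF co \<open>0 < L\<close>, of u'], of "2 * lam * beta"]
      \<open>0 \<le> lam\<close> \<open>0 \<le> beta\<close> by simp
  moreover have "(lam * beta * L / 2) * (norm (u' - u))\<^sup>2 \<le> kappa * (norm (u' - u))\<^sup>2"
    by (intro mult_right_mono kappa) simp
  ultimately show ?thesis unfolding frb_energy_def by (simp add: algebra_simps)
qed

locale frb_parameters =
  fixes B :: "'a::real_inner \<Rightarrow> 'a" and alpha beta lam m rho :: real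
  assumes alpha: "0 \<le> alpha" "alpha < 1" and beta: "0 < beta" and lam: "0 < lam"
    and rho: "0 \<le> rho" "rho < 1"
    and descent_rate: "0 < 2 - beta - 2 * alpha - alpha * beta - 2 * m"
    and cross_term_bound: "\<And>u v w. 2 * alpha * inner (w - v) (v - u) - 2 * lam * inner (w - v) (B v - B u)
      \<le> (alpha + m) * ((norm (w - v))\<^sup>2 + (norm (v - u))\<^sup>2)"
    and energy_lower_bound: "\<And>u v p. beta * ((norm (v - p))\<^sup>2 - rho * (norm (u - p))\<^sup>2)
      \<le> frb_energy alpha beta lam (alpha + m + alpha * beta) (v - p) (u - p) (B u - B p)"

lemma frb_parameters_lipschitz:
  assumes monB: "\<And>u v. 0 \<le> inner (u - v) (B u - B v)"
    and lipB: "\<And>u v. norm (B u - B v) \<le> L * norm (u - v)"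
    and "0 \<le> alpha" "0 < beta" "0 < lam" "0 < L"
    and step_size: "lam < min ((2 - beta - alpha * beta - 2 * alpha) / (2 * L))
      ((1 - alpha - alpha * beta) / (beta * L))"
  shows "frb_parameters B alpha beta lam (lam * L) (alpha + lam * L * beta)"
proof
  have "lam * (2 * L) < 2 - beta - alpha * beta - 2 * alpha" "lam * (beta * L) < 1 - alpha - alpha * beta"
    using step_size \<open>0 < L\<close> \<open>0 < beta\<close> by (simp_all add: pos_less_divide_eq)
  moreover have "0 \<le> alpha * beta" "0 < lam * L * beta" using assms(3-6) by simp_all
  ultimately show "0 < 2 - beta - 2 * alpha - alpha * beta - 2 * (lam * L)" "alpha + lam * L * beta < 1"
    "alpha < 1" by (simp_all add: algebra_simps)
  show "0 \<le> alpha + lam * L * beta" using assms(3-6) by simp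
  show "2 * alpha * inner (w - v) (v - u) - 2 * lam * inner (w - v) (B v - B u)
      \<le> (alpha + lam * L) * ((norm (w - v))\<^sup>2 + (norm (v - u))\<^sup>2)" for u v w
    using assms(3-6) by (intro cross_term_bound_lipschitz lipB) simp_all
  show "beta * ((norm (v - p))\<^sup>2 - (alpha + lam * L * beta) * (norm (u - p))\<^sup>2)
      \<le> frb_energy alpha beta lam (alpha + lam * L + alpha * beta) (v - p) (u - p) (B u - B p)" for u v p
    using assms(3-6) by (intro frb_energy_lower_bound_lipschitz lipB monB) simp_all
qed (use assms in simp_all)

text \<open>Case (b) needs only the first of the two step-size bounds.\<close>
lemma frb_parameters_cocoercive:
  assumes co: "cocoercive (1 / L) B"
    and "0 \<le> alpha" "0 < beta" "beta \<le> 1" "0 < lam" "0 < L"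
    and inertia: "alpha < (2 - beta) / (2 + beta)"
    and step_size: "lam < (2 - beta - alpha * beta + 2 * alpha) / (2 * L)"
  shows "frb_parameters B alpha beta lam (max 0 (lam * L - 2 * alpha)) alpha"
proof
  have co': "(1 / L) * (norm (B u - B v))\<^sup>2 \<le> inner (u - v) (B u - B v)" for u v
    using co unfolding cocoercive_def by blast
  have inertia': "alpha * (2 + beta) < 2 - beta" using inertia \<open>0 < beta\<close> by (simp add: pos_less_divide_eq)
  moreover have "0 \<le> alpha * beta" using \<open>0 < beta\<close> \<open>0 \<le> alpha\<close> by simp
  ultimately show "alpha < 1" using \<open>0 < beta\<close> by (simp add: algebra_simps)
  have "lam * (2 * L) < 2 - beta - alpha * beta + 2 * alpha"
    using step_size \<open>0 < L\<close> by (simp add: pos_less_divide_eq)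
  with inertia' show "0 < 2 - beta - 2 * alpha - alpha * beta - 2 * max 0 (lam * L - 2 * alpha)"
    by (simp add: max_def algebra_simps)
  show "2 * alpha * inner (w - v) (v - u) - 2 * lam * inner (w - v) (B v - B u)
      \<le> (alpha + max 0 (lam * L - 2 * alpha)) * ((norm (w - v))\<^sup>2 + (norm (v - u))\<^sup>2)" for u v w
    using assms(2-6) by (intro cross_term_bound_cocoercive co') simp_all
  have "lam * beta * L / 2 \<le> alpha + max 0 (lam * L - 2 * alpha) + alpha * beta"
  proof (cases "lam * L \<le> 2 * alpha")
    case True
    have "lam * beta * L / 2 = beta * (lam * L / 2)" by simp
    also have "\<dots> \<le> beta * alpha" using True \<open>0 < beta\<close> by (intro mult_left_mono) auto
    finally show ?thesis using True \<open>0 \<le> alpha\<close> by (simp add: max_def algebra_simps)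
  next
    case False
    have "lam * beta * L / 2 \<le> lam * L / 2" using assms(4-6) by (simp add: mult_left_le)
    moreover have "0 \<le> alpha * beta" using assms(2,3) by simp
    ultimately show ?thesis using False by (simp add: max_def algebra_simps)
  qed
  then show "beta * ((norm (v - p))\<^sup>2 - alpha * (norm (u - p))\<^sup>2)
      \<le> frb_energy alpha beta lam (alpha + max 0 (lam * L - 2 * alpha) + alpha * beta)
          (v - p) (u - p) (B u - B p)" for u v p
    using assms(3-6) by (intro frb_energy_lower_bound_cocoercive[OF co']) simp_all
qed (use assms in simp_all)

section \<open>The iteration\<close>

text \<open>The iteration is re-indexed from \<open>k = -1\<close>: \<open>y n = x\<^sub>n\<^sub>-\<^sub>1\<close>, \<open>z k = z\<^sub>k\<^sub>+\<^sub>1\<close>, and \<open>a k \<in> A z\<^sub>k\<^sub>+\<^sub>1\<close> is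
  the element of \<open>A\<close> produced by the resolvent step.\<close>
locale relaxed_inertial_frb = frb_parameters B alpha beta lam m rho
  for B :: "'a::{real_inner,complete_space} \<Rightarrow> 'a" and alpha beta lam m rho :: real +
  fixes A :: "'a \<Rightarrow> 'a set" and L :: real and y z a :: "nat \<Rightarrow> 'a"
  assumes maxA: "maximal_monotone A"
    and monB: "\<And>u v. 0 \<le> inner (u - v) (B u - B v)"
    and L: "0 < L" and lipB: "\<And>u v. norm (B u - B v) \<le> L * norm (u - v)"
    and resolvent_step: "\<And>k. a k \<in> A (z k)"
      "\<And>k. y (Suc k) - lam *\<^sub>R B (y (Suc k)) - (lam / beta) *\<^sub>R (B (y (Suc k)) - B (y k))
         + (alpha / beta) *\<^sub>R (y (Suc k) - y k) = z k + lam *\<^sub>R a k"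
    and relaxation_step: "\<And>k. y (Suc (Suc k)) = (1 - beta) *\<^sub>R y (Suc k) + beta *\<^sub>R z k"
begin

definition energy :: "'a \<Rightarrow> nat \<Rightarrow> real" where
  "energy p n = frb_energy alpha beta lam (alpha + m + alpha * beta) (y (Suc n) - p) (y n - p) (B (y n) - B p)"

lemma step_inequality:
  assumes "p \<in> zeros_sum A B"
  shows "0 \<le> inner ((y (Suc (Suc n)) - p) - (1 - beta) *\<^sub>R (y (Suc n) - p))
    (- ((y (Suc (Suc n)) - p) - (y (Suc n) - p)) + alpha *\<^sub>R ((y (Suc n) - p) - (y n - p))
     - (lam * (1 + beta)) *\<^sub>R (B (y (Suc n)) - B p) + lam *\<^sub>R (B (y n) - B p))"
proof -
  obtain q where "q \<in> A p" "q + B p = 0" using assms unfolding zeros_sum_def by blast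
  then have q: "q \<in> A p" "q = - B p" by (simp_all add: eq_neg_iff_add_eq_0)
  have "(y (Suc (Suc n)) - p) - (1 - beta) *\<^sub>R (y (Suc n) - p) = beta *\<^sub>R (z n - p)"
    using relaxation_step[of n] by (simp add: algebra_simps)
  moreover have "- ((y (Suc (Suc n)) - p) - (y (Suc n) - p)) + alpha *\<^sub>R ((y (Suc n) - p) - (y n - p))
     - (lam * (1 + beta)) *\<^sub>R (B (y (Suc n)) - B p) + lam *\<^sub>R (B (y n) - B p) = (lam * beta) *\<^sub>R (a n - q)"
  proof -
    have "beta *\<^sub>R (z n + lam *\<^sub>R a n) = beta *\<^sub>R y (Suc n) - (beta * lam) *\<^sub>R B (y (Suc n))
        - lam *\<^sub>R (B (y (Suc n)) - B (y n)) + alpha *\<^sub>R (y (Suc n) - y n)"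
      unfolding resolvent_step(2)[symmetric] using beta by (simp add: scaleR_add_right scaleR_diff_right)
    then have z: "beta *\<^sub>R z n = beta *\<^sub>R y (Suc n) - (beta * lam) *\<^sub>R B (y (Suc n))
        - lam *\<^sub>R (B (y (Suc n)) - B (y n)) + alpha *\<^sub>R (y (Suc n) - y n) - (lam * beta) *\<^sub>R a n"
      by (simp add: algebra_simps)
    have "(y (Suc (Suc n)) - p) - (y (Suc n) - p) = beta *\<^sub>R z n - beta *\<^sub>R y (Suc n)"
      using relaxation_step[of n] by (simp add: algebra_simps)
    then show ?thesis unfolding z using q(2) by (simp add: algebra_simps)
  qed
  ultimately show ?thesis
    using monotone_opD[OF maximal_monotone_imp_monotone[OF maxA] resolvent_step(1) q(1)] beta lam
    by simp
qed

lemma energy_descent: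
  assumes "p \<in> zeros_sum A B"
  shows "energy p (Suc n) + (2 - beta - 2 * alpha - alpha * beta - 2 * m) * (norm (y (Suc (Suc n)) - y (Suc n)))\<^sup>2
    + 2 * lam * beta\<^sup>2 * inner (y (Suc n) - p) (B (y (Suc n)) - B p) \<le> energy p n"
proof -
  have "2 * alpha * inner ((y (Suc (Suc n)) - p) - (y (Suc n) - p)) ((y (Suc n) - p) - (y n - p))
      - 2 * lam * inner ((y (Suc (Suc n)) - p) - (y (Suc n) - p)) ((B (y (Suc n)) - B p) - (B (y n) - B p))
    \<le> (alpha + m) * ((norm ((y (Suc (Suc n)) - p) - (y (Suc n) - p)))\<^sup>2
      + (norm ((y (Suc n) - p) - (y n - p)))\<^sup>2)"
    using cross_term_bound[where u = "y n" and v = "y (Suc n)" and w = "y (Suc (Suc n))"] by simp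
  from frb_energy_descent[OF step_inequality[OF assms] this] show ?thesis
    unfolding energy_def by simp
qed

lemma fejer:
  assumes "p \<in> zeros_sum A B"
  shows "convergent (\<lambda>n. (norm (y n - p))\<^sup>2)" and "(\<lambda>n. y (Suc n) - y n) \<longlonglongrightarrow> 0"
proof -
  define h where "h n = (norm (y n - p))\<^sup>2" for n
  define D where "D n = (norm (y (Suc n) - y n))\<^sup>2" for n
  define e where "e n = B (y n) - B p" for n
  define psi where "psi n = inner (y n - p) (e n)" for n
  have "0 < 2 * lam * beta\<^sup>2" using lam beta by simp
  then obtain M where M: "\<And>n. h n \<le> M" and "D \<longlonglongrightarrow> 0" "psi \<longlonglongrightarrow> 0" "convergent (energy p)"
    using lyapunov_descent_limits[OF beta rho descent_rate, of "2 * lam * beta\<^sup>2" "energy p" D psi h]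
      energy_descent[OF assms] energy_lower_bound monB
    unfolding h_def D_def psi_def e_def energy_def by auto
  have "(\<lambda>n. norm (y (Suc n) - y n)) \<longlonglongrightarrow> sqrt 0"
    using tendsto_real_sqrt[OF \<open>D \<longlonglongrightarrow> 0\<close>] unfolding D_def by simp
  then show \<Delta>: "(\<lambda>n. y (Suc n) - y n) \<longlonglongrightarrow> 0" by (simp add: tendsto_norm_zero_iff)
  have y_bound: "norm (y n - p) \<le> sqrt M" for n using M[of n] unfolding h_def by (simp add: real_le_rsqrt)
  have e_bound: "norm (e n) \<le> L * sqrt M" for n
    using lipB[of "y n" p] mult_left_mono[OF y_bound[of n] L[THEN less_imp_le]] unfolding e_def by linarith
  have "(\<lambda>n. 2 * lam * beta * (psi n + inner (y (Suc n) - y n) (e n)) + (alpha + m + alpha * beta) * D n)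
      \<longlonglongrightarrow> 2 * lam * beta * (0 + 0) + (alpha + m + alpha * beta) * 0"
    using \<open>psi \<longlonglongrightarrow> 0\<close> inner_tendsto_zero_if_bounded[OF \<Delta> e_bound] \<open>D \<longlonglongrightarrow> 0\<close> by (intro tendsto_intros)
  moreover have "energy p n - beta * (h (Suc n) - alpha * h n) =
      2 * lam * beta * (psi n + inner (y (Suc n) - y n) (e n)) + (alpha + m + alpha * beta) * D n" for n
    unfolding energy_def frb_energy_def h_def D_def psi_def e_def
    by (simp add: inner_diff_left inner_diff_right algebra_simps)
  ultimately have "(\<lambda>n. energy p n - beta * (h (Suc n) - alpha * h n)) \<longlonglongrightarrow> 0" by simp
  then have "(\<lambda>n. (energy p n - (energy p n - beta * (h (Suc n) - alpha * h n))) / beta)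
      \<longlonglongrightarrow> (lim (energy p) - 0) / beta"
    using \<open>convergent (energy p)\<close> beta by (intro tendsto_intros) (auto simp: convergent_LIMSEQ_iff)
  then have "convergent (\<lambda>n. h (Suc n) - alpha * h n)" using beta by (auto simp: convergent_def)
  moreover have "(\<lambda>n. h (Suc n) - h n) \<longlonglongrightarrow> 0"
  proof -
    have eq: "h (Suc n) - h n = inner (y (Suc n) - y n) ((y (Suc n) - p) + (y n - p))" for n
      unfolding h_def by (simp add: power2_norm_eq_inner inner_add_right inner_diff_left inner_diff_right
          inner_commute)
    have bound: "norm ((y (Suc n) - p) + (y n - p)) \<le> 2 * sqrt M" for n
      using norm_triangle_ineq[of "y (Suc n) - p" "y n - p"] y_bound[of n] y_bound[of "Suc n"] by simp
    show ?thesis unfolding eq by (rule inner_tendsto_zero_if_bounded[OF \<Delta> bound])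
  qed
  ultimately have "convergent h"
    by (rule convergent_if_inertial_combination_convergent[rotated]) (use alpha(2) in simp)
  then show "convergent (\<lambda>n. (norm (y n - p))\<^sup>2)" unfolding h_def .
qed

lemma residuals_tendsto_zero:
  assumes \<Delta>: "(\<lambda>n. y (Suc n) - y n) \<longlonglongrightarrow> 0"
  shows "(\<lambda>k. z k - y (Suc k)) \<longlonglongrightarrow> 0" and "(\<lambda>k. a k + B (z k)) \<longlonglongrightarrow> 0"
proof -
  have B_diff: "(\<lambda>k. B (f k) - B (g k)) \<longlonglongrightarrow> 0" if "(\<lambda>k. f k - g k) \<longlonglongrightarrow> 0" for f g :: "nat \<Rightarrow> 'a"
    by (rule tendsto_0_le[OF that, of _ L]) (simp add: lipB mult.commute)
  have "z k - y (Suc k) = (1 / beta) *\<^sub>R (y (Suc (Suc k)) - y (Suc k))" for k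
    unfolding relaxation_step using beta by (simp add: algebra_simps)
  moreover have "(\<lambda>k. (1 / beta) *\<^sub>R (y (Suc (Suc k)) - y (Suc k))) \<longlonglongrightarrow> (1 / beta) *\<^sub>R 0"
    using LIMSEQ_Suc[OF \<Delta>] by (intro tendsto_intros)
  ultimately show zy: "(\<lambda>k. z k - y (Suc k)) \<longlonglongrightarrow> 0" by simp
  have "lam *\<^sub>R (a k + B (z k)) = (y (Suc k) - z k) + lam *\<^sub>R (B (z k) - B (y (Suc k)))
      - (lam / beta) *\<^sub>R (B (y (Suc k)) - B (y k)) + (alpha / beta) *\<^sub>R (y (Suc k) - y k)" for k
  proof -
    have "lam *\<^sub>R a k = y (Suc k) - lam *\<^sub>R B (y (Suc k)) - (lam / beta) *\<^sub>R (B (y (Suc k)) - B (y k))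
        + (alpha / beta) *\<^sub>R (y (Suc k) - y k) - z k"
      using resolvent_step(2)[of k] by (metis add_diff_cancel_left')
    then show ?thesis by (simp add: scaleR_add_right algebra_simps)
  qed
  moreover have "(\<lambda>k. (y (Suc k) - z k) + lam *\<^sub>R (B (z k) - B (y (Suc k)))
      - (lam / beta) *\<^sub>R (B (y (Suc k)) - B (y k)) + (alpha / beta) *\<^sub>R (y (Suc k) - y k))
    \<longlonglongrightarrow> - 0 + lam *\<^sub>R 0 - (lam / beta) *\<^sub>R 0 + (alpha / beta) *\<^sub>R 0"
    using tendsto_minus[OF zy] B_diff[OF zy] B_diff[OF \<Delta>] \<Delta> by (intro tendsto_intros) simp_all
  ultimately have "(\<lambda>k. (1 / lam) *\<^sub>R (lam *\<^sub>R (a k + B (z k)))) \<longlonglongrightarrow> (1 / lam) *\<^sub>R 0"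
    by (intro tendsto_intros) simp
  then show "(\<lambda>k. a k + B (z k)) \<longlonglongrightarrow> 0" using lam by simp
qed

lemma weakly_converges_to_zero:
  assumes "zeros_sum A B \<noteq> {}"
  shows "\<exists>p\<in>zeros_sum A B. weakly_converges (\<lambda>k. y (Suc k)) p"
proof (rule opial[OF assms])
  obtain p0 where "p0 \<in> zeros_sum A B" using assms by blast
  note \<Delta> = fejer(2)[OF this]
  show fejer': "convergent (\<lambda>k. (norm (y (Suc k) - p))\<^sup>2)" if "p \<in> zeros_sum A B" for p
    using fejer(1)[OF that] convergent_Suc_iff[where f = "\<lambda>n. (norm (y n - p))\<^sup>2"] by simp
  obtain R where R: "\<And>k. norm (y (Suc k)) \<le> R"
    using bounded_if_convergent_dist_power2[of "\<lambda>k. y (Suc k)" p0, OF fejer'[OF \<open>p0 \<in> zeros_sum A B\<close>]]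
    by blast
  fix r q assume "strict_mono r" "weakly_converges ((\<lambda>k. y (Suc k)) \<circ> r) q"
  have "0 \<le> inner (q - u) (- (v + B u))" if "v \<in> A u" for u v
  proof (rule weak_limit_monotone_related[OF maximal_monotone_imp_monotone[OF maxA] monB])
    show "(a \<circ> r) k \<in> A ((z \<circ> r) k)" for k using resolvent_step(1) by simp
    show "(\<lambda>k. (z \<circ> r) k - y (Suc (r k))) \<longlonglongrightarrow> 0"
      using LIMSEQ_subseq_LIMSEQ[OF residuals_tendsto_zero(1)[OF \<Delta>] \<open>strict_mono r\<close>] by (simp add: o_def)
    show "(\<lambda>k. (a \<circ> r) k + B ((z \<circ> r) k)) \<longlonglongrightarrow> 0"
      using LIMSEQ_subseq_LIMSEQ[OF residuals_tendsto_zero(2)[OF \<Delta>] \<open>strict_mono r\<close>] by (simp add: o_def)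
    show "weakly_converges (\<lambda>k. y (Suc (r k))) q"
      using \<open>weakly_converges ((\<lambda>k. y (Suc k)) \<circ> r) q\<close> by (simp add: o_def)
    show "norm (y (Suc (r k))) \<le> R" for k by (rule R)
  qed (rule that)
  then show "q \<in> zeros_sum A B" by (rule zeros_sum_if_monotone_related[OF maxA L lipB])
qed

end

lemma frb_parameters_exist:
  fixes B :: "'a::real_inner \<Rightarrow> 'a"
  assumes monB: "\<And>u v. 0 \<le> inner (u - v) (B u - B v)"
    and lipB: "\<And>u v. norm (B u - B v) \<le> L * norm (u - v)"
    and "0 \<le> alpha" "0 < beta" "beta \<le> 1" "0 < lam" "0 < L"
    and cases:
      "(L-lipschitz_on UNIV B \<and>
          lam < min ((2 - beta - alpha * beta - 2 * alpha) / (2 * L))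
                    ((1 - alpha - alpha * beta) / (beta * L)))
       \<or> (cocoercive (1 / L) B \<and> alpha < (2 - beta) / (2 + beta) \<and>
          lam < min ((2 - beta - alpha * beta + 2 * alpha) / (2 * L))
                    ((1 - alpha + alpha * beta) / (beta * L)))"
  shows "\<exists>m rho. frb_parameters B alpha beta lam m rho"
  using cases
proof (elim disjE conjE)
  assume "L-lipschitz_on UNIV B"
    and "lam < min ((2 - beta - alpha * beta - 2 * alpha) / (2 * L)) ((1 - alpha - alpha * beta) / (beta * L))"
  with frb_parameters_lipschitz[OF monB lipB assms(3,4,6,7)] show ?thesis by blast
next
  assume "cocoercive (1 / L) B" and "alpha < (2 - beta) / (2 + beta)"
    and "lam < min ((2 - beta - alpha * beta + 2 * alpha) / (2 * L)) ((1 - alpha + alpha * beta) / (beta * L))"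
  then have "frb_parameters B alpha beta lam (max 0 (lam * L - 2 * alpha)) alpha"
    by (intro frb_parameters_cocoercive[OF _ assms(3-7)]) simp_all
  then show ?thesis by blast
qed

lemma resolvent_sequence_in_graph:
  fixes A :: "'a::{real_inner,complete_space} \<Rightarrow> 'a set"
  assumes "maximal_monotone A" "0 < lam" and z: "\<And>k. z k = resolvent lam A (w k)"
  obtains a where "\<And>k. a k \<in> A (z k)" "\<And>k. w k = z k + lam *\<^sub>R a k"
proof -
  have "\<forall>k. \<exists>u. u \<in> A (z k) \<and> w k = z k + lam *\<^sub>R u"
    using resolvent_characterization[OF assms(1,2)] unfolding z by blast
  from choice[OF this] obtain a where "\<forall>k. a k \<in> A (z k) \<and> w k = z k + lam *\<^sub>R a k" by blast
  then show ?thesis by (intro that[of a]) auto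
qed

theorem theorem4p3:
  fixes A :: "'a::{real_inner, complete_space} \<Rightarrow> 'a set"
    and B :: "'a \<Rightarrow> 'a"
    and alpha beta lam L :: real
    and x z :: "nat \<Rightarrow> 'a"
    and xm1 :: 'a
  assumes maxA: "maximal_monotone A"
    and monB: "monotone_op (\<lambda>y. {B y})"
    and nonempty: "zeros_sum A B \<noteq> {}"
    and alpha: "0 \<le> alpha" "alpha < 1"
    and beta: "0 < beta" "beta \<le> 1"
    and lam: "lam > 0"
    and L: "L > 0"
    and cases:
      "(L-lipschitz_on UNIV B \<and>
          lam < min ((2 - beta - alpha * beta - 2 * alpha) / (2 * L))
                    ((1 - alpha - alpha * beta) / (beta * L)))
       \<or> (cocoercive (1 / L) B \<and> alpha < (2 - beta) / (2 + beta) \<and>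
          lam < min ((2 - beta - alpha * beta + 2 * alpha) / (2 * L))
                    ((1 - alpha + alpha * beta) / (beta * L)))"
    and zrec: "\<And>k. z (Suc k) = resolvent lam A
        (x k - lam *\<^sub>R B (x k)
             - (lam / beta) *\<^sub>R (B (x k) - B (if k = 0 then xm1 else x (k - 1)))
             + (alpha / beta) *\<^sub>R (x k - (if k = 0 then xm1 else x (k - 1))))"
    and xrec: "\<And>k. x (Suc k) = (1 - beta) *\<^sub>R x k + beta *\<^sub>R z (Suc k)"
  shows "\<exists>p \<in> zeros_sum A B. weakly_converges x p"
proof -
  have monB': "0 \<le> inner (u - v) (B u - B v)" for u v
    using monB unfolding monotone_op_def by blast
  have "L-lipschitz_on UNIV B" using cases cocoercive_imp_lipschitz[OF _ L] by blast
  then have lipB: "norm (B u - B v) \<le> L * norm (u - v)" for u v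
    by (simp add: lipschitz_on_def dist_norm)
  obtain m rho where params: "frb_parameters B alpha beta lam m rho"
    using frb_parameters_exist[OF monB' lipB alpha(1) beta lam L cases] by blast
  define y where "y n = (if n = 0 then xm1 else x (n - 1))" for n
  define w where "w k = y (Suc k) - lam *\<^sub>R B (y (Suc k)) - (lam / beta) *\<^sub>R (B (y (Suc k)) - B (y k))
    + (alpha / beta) *\<^sub>R (y (Suc k) - y k)" for k
  have "z (Suc k) = resolvent lam A (w k)" for k using zrec[of k] unfolding w_def y_def by simp
  then obtain a where a: "\<And>k. a k \<in> A (z (Suc k))" "\<And>k. w k = z (Suc k) + lam *\<^sub>R a k"
    using resolvent_sequence_in_graph[OF maxA lam, of "\<lambda>k. z (Suc k)" w] by blast
  interpret relaxed_inertial_frb B alpha beta lam m rho A L y "\<lambda>k. z (Suc k)" a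
  proof (intro relaxed_inertial_frb.intro relaxed_inertial_frb_axioms.intro params maxA monB' L lipB a(1))
    show "y (Suc (Suc k)) = (1 - beta) *\<^sub>R y (Suc k) + beta *\<^sub>R z (Suc k)" for k
      using xrec[of k] unfolding y_def by simp
  qed (use a(2) in \<open>simp add: w_def\<close>)
  show ?thesis using weakly_converges_to_zero[OF nonempty] by (simp add: y_def)
qed

end
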